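(* If $M$ is a term of $\ell\Lambda_\infty^{4S}$ and $M\leadsto N\to_0 L$, then there is a term $P$ of $\ell\Lambda_\infty^{4S}$ such that $M\to_0 P\leadsto L$.
   Context: Preterms: possibly infinite trees generated by $M ::= x \mid MN \mid \lambda x.M \mid \lambda^{\downarrow}x.M \mid \lambda^{\uparrow}x.M \mid \downarrow M \mid \uparrow M$ ($\downarrow M$ inductive box, $\uparrow M$ coinductive box); substitution is capture-avoiding. Patterns: $x,\downarrow x,\uparrow x,\#x,\dagger x$; environments: finite sets of patterns, each variable in at most one; $\Theta,\Xi,\Psi,\Phi$ linear environments with marked versions $\#\Theta$ etc.; $\Upsilon,\Pi$ environments with only patterns $y$, $\downarrow y$; commas are disjoint unions. A term of $\ell\Lambda_\infty^{4S}$ is a preterm $M$ with $\Gamma\vdash M$ derivable for some $\Gamma$ by: (vl) $\#\Theta,\uparrow\Xi,\dagger\Psi,x\vdash x$; (vd) $\#\Theta,\uparrow\Xi,\dagger\Psi,\#x\vdash x$; (va) $\#\Theta,\uparrow\Xi,\dagger\Psi,\dagger x\vdash x$; (a) from $\Upsilon,\#\Theta,\uparrow\Xi,\dagger\Psi\vdash M$ and $\Pi,\#\Theta,\uparrow\Xi,\dagger\Psi\vdash N$ infer $\Upsilon,\Pi,\#\Theta,\uparrow\Xi,\dagger\Psi\vdash MN$; (ll) $\Gamma,x\vdash M$ gives $\Gamma\vdash\lambda x.M$; (li)$_1$ $\Gamma,\#x\vdash M$ gives $\Gamma\vdash\lambda^\downarrow x.M$; (li)$_2$ $\Gamma,\downarrow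 x\vdash M$ gives $\Gamma\vdash\lambda^\downarrow x.M$; (lc) $\Gamma,\uparrow x\vdash M$ gives $\Gamma\vdash\lambda^\uparrow x.M$; (mi) from $\Xi,\uparrow\Psi,\dagger\Phi\vdash M$ infer $\#\Theta,\downarrow\Xi,\uparrow\Psi,\dagger\Phi\vdash\downarrow M$; (mc) from $\dagger\Xi,\dagger\Psi\vdash M$ infer $\#\Theta,\uparrow\Xi,\dagger\Psi\vdash\uparrow M$; (mc) coinductive, others inductive (every infinite branch of a derivation contains infinitely many (mc)). Basic reduction: $(\lambda x.M)N\mapsto M[N/x]$, $(\lambda^\downarrow x.M)(\downarrow N)\mapsto M[N/x]$, $(\lambda^\uparrow x.M)(\uparrow N)\mapsto M[N/x]$. $M\to N$ iff $M=C[L]$, $N=C[P]$, $L\mapsto P$ for a one-hole context $C$; $M\to_0 N$ is the special case in which the hole of $C$ lies inside no coinductive box $\uparrow(\cdot)$. Infinitary reduction $\Rightarrow$ and $\leadsto$ are given by the mixed formal system: (coinductive rule) if $M\to^*N$ and $N\leadsto L$ then $M\Rightarrow L$; (inductive rules) $x\leadsto x$; if $M\leadsto N$ and $L\leadsto P$ then $ML\leadsto NP$; if $M\leadsto N$ then $\lambda x.M\leadsto\lambda x.N$, $\lambda^\downarrow x.M\leadsto\lambda^\downarrow x.N$, $\lambda^\uparrow x.M\leadsto\lambda^\uparrow x.N$ and $\downarrow M\leadsto\downarrow N$; if $M\Rightarrow N$ then $\uparrow M\leadsto\uparrow N$. A judgment holds iff it is the root of a possibly infinite derivation tree in which every infinite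 branch uses the coinductive rule infinitely often. *)

theory Defs
  imports Main "HOL-Library.BNF_Corec"
begin

codatatype trm =
    Var nat            (* variable (de Bruijn index) *)
  | App trm trm
  | Lam trm
  | LamI trm           (* \<lambda>\<^sup>\<down>x. M *)
  | LamC trm           (* \<lambda>\<^sup>\<up>x. M *)
  | BoxI trm           (* \<down>M, inductive box *)
  | BoxC trm           (* \<up>M, coinductive box *)

primcorec lift :: "nat \<Rightarrow> trm \<Rightarrow> trm" where
  "lift k M = (case M of
      Var i \<Rightarrow> Var (if i < k then i else Suc i)
    | App A B \<Rightarrow> App (lift k A) (lift k B)
    | Lam A \<Rightarrow> Lam (lift (Suc k) A)
    | LamI A \<Rightarrow> LamI (lift (Suc k) A)
    | LamC A \<Rightarrow> LamC (lift (Suc k) A)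
    | BoxI A \<Rightarrow> BoxI (lift k A)
    | BoxC A \<Rightarrow> BoxC (lift k A))"

text \<open>Capture-avoiding substitution \<open>M[N/k]\<close> (indices above \<open>k\<close> are decremented,
  as the binder for \<open>k\<close> disappears).\<close>
corec subst :: "nat \<Rightarrow> trm \<Rightarrow> trm \<Rightarrow> trm" where
  "subst k N M = (case M of
      Var i \<Rightarrow> (if i = k then N else if k < i then Var (i - 1) else Var i)
    | App A B \<Rightarrow> App (subst k N A) (subst k N B)
    | Lam A \<Rightarrow> Lam (subst (Suc k) (lift 0 N) A)
    | LamI A \<Rightarrow> LamI (subst (Suc k) (lift 0 N) A)
    | LamC A \<Rightarrow> LamC (subst (Suc k) (lift 0 N) A)
    | BoxI A \<Rightarrow> BoxI (subst k N A)
    | BoxC A \<Rightarrow> BoxC (subst k N A))"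

text \<open>Patterns \<open>x, \<down>x, \<up>x, #x, \<dagger>x\<close>.\<close>
datatype pat = PLin | PDown | PUp | PHash | PDag

type_synonym env = "nat \<Rightarrow> pat option"

definition env_ok :: "env \<Rightarrow> bool" where
  "env_ok \<Gamma> \<longleftrightarrow> finite {i. \<Gamma> i \<noteq> None}"

definition ext :: "pat \<Rightarrow> env \<Rightarrow> env" where
  "ext p \<Gamma> = case_nat (Some p) \<Gamma>"

text \<open>\<open>\<Gamma> = #\<Theta>,\<up>\<Xi>,\<dagger>\<Psi>,p x\<close>\<close>
definition var_env :: "pat \<Rightarrow> nat \<Rightarrow> env \<Rightarrow> bool" where
  "var_env p x \<Gamma> \<longleftrightarrow> \<Gamma> x = Some p \<and>
     (\<forall>y. y \<noteq> x \<longrightarrow> \<Gamma> y \<in> {None, Some PHash, Some PUp, Some PDag})"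

text \<open>\<open>\<Gamma> = \<Upsilon>,\<Pi>,#\<Theta>,\<up>\<Xi>,\<dagger>\<Psi>\<close>, \<open>\<Gamma>1 = \<Upsilon>,#\<Theta>,\<up>\<Xi>,\<dagger>\<Psi>\<close>, \<open>\<Gamma>2 = \<Pi>,#\<Theta>,\<up>\<Xi>,\<dagger>\<Psi>\<close>.\<close>
definition app_split :: "env \<Rightarrow> env \<Rightarrow> env \<Rightarrow> bool" where
  "app_split \<Gamma> \<Gamma>1 \<Gamma>2 \<longleftrightarrow> (\<forall>y.
     (\<Gamma> y \<in> {Some PLin, Some PDown} \<longrightarrow>
        (\<Gamma>1 y = \<Gamma> y \<and> \<Gamma>2 y = None) \<or> (\<Gamma>1 y = None \<and> \<Gamma>2 y = \<Gamma> y)) \<and>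
     (\<Gamma> y \<notin> {Some PLin, Some PDown} \<longrightarrow> \<Gamma>1 y = \<Gamma> y \<and> \<Gamma>2 y = \<Gamma> y))"

text \<open>(mi): conclusion \<open>\<Gamma> = #\<Theta>,\<down>\<Xi>,\<up>\<Psi>,\<dagger>\<Phi>\<close>, premise \<open>\<Delta> = \<Xi>,\<up>\<Psi>,\<dagger>\<Phi>\<close>.\<close>
definition boxi_env :: "env \<Rightarrow> env \<Rightarrow> bool" where
  "boxi_env \<Gamma> \<Delta> \<longleftrightarrow> (\<forall>y. \<Gamma> y \<noteq> Some PLin \<and>
     \<Delta> y = (case \<Gamma> y of None \<Rightarrow> None | Some PHash \<Rightarrow> None
              | Some PDown \<Rightarrow> Some PLin | Some PUp \<Rightarrow> Some PUp
              | Some PDag \<Rightarrow> Some PDag | Some PLin \<Rightarrow> None))"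

text \<open>(mc): conclusion \<open>\<Gamma> = #\<Theta>,\<up>\<Xi>,\<dagger>\<Psi>\<close>, premise \<open>\<Delta> = \<dagger>\<Xi>,\<dagger>\<Psi>\<close>.\<close>
definition boxc_env :: "env \<Rightarrow> env \<Rightarrow> bool" where
  "boxc_env \<Gamma> \<Delta> \<longleftrightarrow> (\<forall>y. \<Gamma> y \<in> {None, Some PHash, Some PUp, Some PDag} \<and>
     \<Delta> y = (case \<Gamma> y of Some PUp \<Rightarrow> Some PDag | Some PDag \<Rightarrow> Some PDag | _ \<Rightarrow> None))"

text \<open>Inductive rules; the coinductive rule (mc) refers to the parameter \<open>R\<close>.\<close>
inductive ty_step :: "(env \<Rightarrow> trm \<Rightarrow> bool) \<Rightarrow> env \<Rightarrow> trm \<Rightarrow> bool" for R where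
  vl: "var_env PLin x \<Gamma> \<Longrightarrow> ty_step R \<Gamma> (Var x)"
| vd: "var_env PHash x \<Gamma> \<Longrightarrow> ty_step R \<Gamma> (Var x)"
| va: "var_env PDag x \<Gamma> \<Longrightarrow> ty_step R \<Gamma> (Var x)"
| a: "app_split \<Gamma> \<Gamma>1 \<Gamma>2 \<Longrightarrow> ty_step R \<Gamma>1 M \<Longrightarrow> ty_step R \<Gamma>2 N \<Longrightarrow> ty_step R \<Gamma> (App M N)"
| ll: "ty_step R (ext PLin \<Gamma>) M \<Longrightarrow> ty_step R \<Gamma> (Lam M)"
| li1: "ty_step R (ext PHash \<Gamma>) M \<Longrightarrow> ty_step R \<Gamma> (LamI M)"
| li2: "ty_step R (ext PDown \<Gamma>) M \<Longrightarrow> ty_step R \<Gamma> (LamI M)"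
| lc: "ty_step R (ext PUp \<Gamma>) M \<Longrightarrow> ty_step R \<Gamma> (LamC M)"
| mi: "boxi_env \<Gamma> \<Delta> \<Longrightarrow> ty_step R \<Delta> M \<Longrightarrow> ty_step R \<Gamma> (BoxI M)"
| mc: "boxc_env \<Gamma> \<Delta> \<Longrightarrow> R \<Delta> M \<Longrightarrow> ty_step R \<Gamma> (BoxC M)"

lemma ty_step_mono[mono]: "R \<le> S \<Longrightarrow> ty_step R \<le> ty_step S"
proof (intro le_funI le_boolI)
  fix \<Gamma> M assume le: "R \<le> S" and h: "ty_step R \<Gamma> M"
  from h show "ty_step S \<Gamma> M"
    by (induction rule: ty_step.induct) (use le in \<open>auto intro: ty_step.intros\<close>)
qed

text \<open>Mixed judgment: greatest fixed point over the inductive rules.\<close>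
coinductive ty :: "env \<Rightarrow> trm \<Rightarrow> bool" where
  "ty_step ty \<Gamma> M \<Longrightarrow> ty \<Gamma> M"

definition is_term :: "trm \<Rightarrow> bool" where
  "is_term M \<longleftrightarrow> (\<exists>\<Gamma>. env_ok \<Gamma> \<and> ty \<Gamma> M)"

inductive basic_red :: "trm \<Rightarrow> trm \<Rightarrow> bool" where
  "basic_red (App (Lam M) N) (subst 0 N M)"
| "basic_red (App (LamI M) (BoxI N)) (subst 0 N M)"
| "basic_red (App (LamC M) (BoxC N)) (subst 0 N M)"

text \<open>\<open>step True\<close> is \<open>\<rightarrow>\<close>; \<open>step False\<close> is \<open>\<rightarrow>\<^sub>0\<close> (hole not inside any \<open>\<up>(\<cdot>)\<close>).\<close>
inductive step :: "bool \<Rightarrow> trm \<Rightarrow> trm \<Rightarrow> bool" for b where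
  root: "basic_red M N \<Longrightarrow> step b M N"
| appL: "step b M M' \<Longrightarrow> step b (App M N) (App M' N)"
| appR: "step b N N' \<Longrightarrow> step b (App M N) (App M N')"
| lam: "step b M M' \<Longrightarrow> step b (Lam M) (Lam M')"
| lamI: "step b M M' \<Longrightarrow> step b (LamI M) (LamI M')"
| lamC: "step b M M' \<Longrightarrow> step b (LamC M) (LamC M')"
| boxI: "step b M M' \<Longrightarrow> step b (BoxI M) (BoxI M')"
| boxC: "b \<Longrightarrow> step b M M' \<Longrightarrow> step b (BoxC M) (BoxC M')"

abbreviation red :: "trm \<Rightarrow> trm \<Rightarrow> bool" where "red \<equiv> step True"
abbreviation red0 :: "trm \<Rightarrow> trm \<Rightarrow> bool" where "red0 \<equiv> step False"

text \<open>Inductive rules of \<open>\<leadsto>\<close>, parametrised by the coinductive relation \<open>\<Rightarrow>\<close>.\<close>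
inductive leads_step :: "(trm \<Rightarrow> trm \<Rightarrow> bool) \<Rightarrow> trm \<Rightarrow> trm \<Rightarrow> bool" for R where
  "leads_step R (Var x) (Var x)"
| "leads_step R M N \<Longrightarrow> leads_step R L P \<Longrightarrow> leads_step R (App M L) (App N P)"
| "leads_step R M N \<Longrightarrow> leads_step R (Lam M) (Lam N)"
| "leads_step R M N \<Longrightarrow> leads_step R (LamI M) (LamI N)"
| "leads_step R M N \<Longrightarrow> leads_step R (LamC M) (LamC N)"
| "leads_step R M N \<Longrightarrow> leads_step R (BoxI M) (BoxI N)"
| "R M N \<Longrightarrow> leads_step R (BoxC M) (BoxC N)"

lemma leads_step_mono[mono]: "R \<le> S \<Longrightarrow> leads_step R \<le> leads_step S"
proof (intro le_funI le_boolI)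
  fix M N assume le: "R \<le> S" and h: "leads_step R M N"
  from h show "leads_step S M N"
    by (induction rule: leads_step.induct) (use le in \<open>auto intro: leads_step.intros\<close>)
qed

coinductive inf_red :: "trm \<Rightarrow> trm \<Rightarrow> bool" where
  "red\<^sup>*\<^sup>* M N \<Longrightarrow> leads_step inf_red N L \<Longrightarrow> inf_red M L"

abbreviation leads :: "trm \<Rightarrow> trm \<Rightarrow> bool" where "leads \<equiv> leads_step inf_red"

end

theory Submission
  imports Defs
begin

text \<open>Induct on the position of the step in \<open>N \<rightarrow>\<^sub>0 L\<close>. Since it does not lie inside a
  coinductive box, \<open>M \<leadsto> N\<close> descends through the same constructors of \<open>M\<close>, so only a root
  contraction remains. Then \<open>M\<close> is a redex of the same kind, and its contractum \<open>\<leadsto>\<close>-reduces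
  to \<open>L\<close> because \<open>\<leadsto>\<close> (and with it \<open>\<Rightarrow>\<close>) is closed under substitution. In the coinductive
  redex \<open>(\<lambda>\<^sup>\<up>x.A)(\<up>B)\<close> the argument is related to its image only by \<open>\<Rightarrow>\<close>; this suffices
  because typing confines \<open>x\<close> to the inside of coinductive boxes of \<open>A\<close>, where \<open>\<leadsto>\<close> asks
  no more than \<open>\<Rightarrow>\<close>. Finally the reduct is a term by subject reduction for \<open>\<rightarrow>\<^sub>0\<close>, which may
  turn some \<open>\<down>\<close>-variables of the environment into \<open>#\<close>-variables.\<close>

section \<open>Substitution\<close>


lemma lift_simps[simp]:
  "lift k (Var i) = Var (if i < k then i else Suc i)"
  "lift k (App A B) = App (lift k A) (lift k B)"
  "lift k (Lam A) = Lam (lift (Suc k) A)"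
  "lift k (LamI A) = LamI (lift (Suc k) A)"
  "lift k (LamC A) = LamC (lift (Suc k) A)"
  "lift k (BoxI A) = BoxI (lift k A)"
  "lift k (BoxC A) = BoxC (lift k A)"
  by (subst lift.code; simp)+

lemma subst_simps[simp]:
  "subst k N (Var i) = (if i = k then N else if k < i then Var (i - 1) else Var i)"
  "subst k N (App A B) = App (subst k N A) (subst k N B)"
  "subst k N (Lam A) = Lam (subst (Suc k) (lift 0 N) A)"
  "subst k N (LamI A) = LamI (subst (Suc k) (lift 0 N) A)"
  "subst k N (LamC A) = LamC (subst (Suc k) (lift 0 N) A)"
  "subst k N (BoxI A) = BoxI (subst k N A)"
  "subst k N (BoxC A) = BoxC (subst k N A)"
  by (subst subst.code; simp)+

lemma lift_lift[simp]: "i \<le> j \<Longrightarrow> lift i (lift j M) = lift (Suc j) (lift i M)"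
  by (coinduction arbitrary: i j M) (case_tac M; auto)

lemma subst_lift[simp]: "subst j X (lift j N) = N"
  by (coinduction arbitrary: j X N) (case_tac N; auto)

inductive same_head :: "(trm \<Rightarrow> trm \<Rightarrow> bool) \<Rightarrow> trm \<Rightarrow> trm \<Rightarrow> bool" for R where
  "same_head R x x"
| "R a c \<Longrightarrow> R b d \<Longrightarrow> same_head R (App a b) (App c d)"
| "R a b \<Longrightarrow> same_head R (Lam a) (Lam b)"
| "R a b \<Longrightarrow> same_head R (LamI a) (LamI b)"
| "R a b \<Longrightarrow> same_head R (LamC a) (LamC b)"
| "R a b \<Longrightarrow> same_head R (BoxI a) (BoxI b)"
| "R a b \<Longrightarrow> same_head R (BoxC a) (BoxC b)"

lemma trm_bisim:
  assumes "R x y" and "\<And>x y. R x y \<Longrightarrow> same_head R x y"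
  shows "x = y"
  using assms(1)
proof (coinduction arbitrary: x y rule: trm.coinduct_strong)
  case (Eq_trm x y)
  from assms(2)[OF Eq_trm] show ?case
    by cases auto
qed

lemma lift_subst_lo:
  assumes "k \<le> j" shows "lift k (subst j N M) = subst (Suc j) (lift k N) (lift k M)"
proof -
  let ?R = "\<lambda>x y. \<exists>k j N M. k \<le> j \<and> x = lift k (subst j N M) \<and> y = subst (Suc j) (lift k N) (lift k M)"
  have step: "same_head ?R (lift k (subst j N M)) (subst (Suc j) (lift k N) (lift k M))"
    if "k \<le> j" for k j N M
    using that by (cases M; force intro: same_head.intros)
  show ?thesis
  proof (rule trm_bisim[where R = ?R])
    show "?R (lift k (subst j N M)) (subst (Suc j) (lift k N) (lift k M))" using assms by blast
  qed (use step in blast)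
qed

lemma lift_subst_hi:
  assumes "j \<le> k" shows "lift k (subst j N M) = subst j (lift k N) (lift (Suc k) M)"
proof -
  let ?R = "\<lambda>x y. \<exists>k j N M. j \<le> k \<and> x = lift k (subst j N M) \<and> y = subst j (lift k N) (lift (Suc k) M)"
  have step: "same_head ?R (lift k (subst j N M)) (subst j (lift k N) (lift (Suc k) M))"
    if "j \<le> k" for k j N M
    using that by (cases M; force intro: same_head.intros)
  show ?thesis
  proof (rule trm_bisim[where R = ?R])
    show "?R (lift k (subst j N M)) (subst j (lift k N) (lift (Suc k) M))" using assms by blast
  qed (use step in blast)
qed

lemma subst_subst:
  assumes "j \<le> k"
  shows "subst k N (subst j B A) = subst j (subst k N B) (subst (Suc k) (lift j N) A)"
proof -
  let ?R = "\<lambda>x y. \<exists>k j N B A. j \<le> k \<and> x = subst k N (subst j B A) \<and>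
    y = subst j (subst k N B) (subst (Suc k) (lift j N) A)"
  have step: "same_head ?R (subst k N (subst j B A)) (subst j (subst k N B) (subst (Suc k) (lift j N) A))"
    if "j \<le> k" for k j N B A
    using that by (cases A; force intro: same_head.intros simp: lift_subst_lo)
  show ?thesis
  proof (rule trm_bisim[where R = ?R])
    show "?R (subst k N (subst j B A)) (subst j (subst k N B) (subst (Suc k) (lift j N) A))"
      using assms by blast
  qed (use step in blast)
qed

section \<open>Reduction and infinitary reduction under substitution\<close>

lemma basic_red_lift: "basic_red M M' \<Longrightarrow> basic_red (lift k M) (lift k M')"
  by (erule basic_red.cases) (simp_all add: lift_subst_hi basic_red.intros)

lemma basic_red_subst: "basic_red M M' \<Longrightarrow> basic_red (subst k N M) (subst k N M')"
  by (erule basic_red.cases) (simp_all add: subst_subst basic_red.intros)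

lemma step_lift: "step b M M' \<Longrightarrow> step b (lift k M) (lift k M')"
  by (induction arbitrary: k rule: step.induct) (auto intro: step.intros basic_red_lift)

lemma step_subst: "step b M M' \<Longrightarrow> step b (subst k N M) (subst k N M')"
  by (induction arbitrary: k N rule: step.induct) (auto intro: step.intros basic_red_subst)

lemma steps_lift: "(step b)\<^sup>*\<^sup>* M M' \<Longrightarrow> (step b)\<^sup>*\<^sup>* (lift k M) (lift k M')"
  by (induction rule: rtranclp_induct) (auto intro: rtranclp.rtrancl_into_rtrancl step_lift)

lemma steps_subst: "(step b)\<^sup>*\<^sup>* M M' \<Longrightarrow> (step b)\<^sup>*\<^sup>* (subst k N M) (subst k N M')"
  by (induction rule: rtranclp_induct) (auto intro: rtranclp.rtrancl_into_rtrancl step_subst)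

lemma steps_cong:
  assumes "(step b)\<^sup>*\<^sup>* M M'"
  shows "(step b)\<^sup>*\<^sup>* (App M N) (App M' N)" "(step b)\<^sup>*\<^sup>* (App N M) (App N M')"
    "(step b)\<^sup>*\<^sup>* (Lam M) (Lam M')" "(step b)\<^sup>*\<^sup>* (LamI M) (LamI M')"
    "(step b)\<^sup>*\<^sup>* (LamC M) (LamC M')" "(step b)\<^sup>*\<^sup>* (BoxI M) (BoxI M')"
  using assms by (induction rule: rtranclp_induct) (auto intro: rtranclp.rtrancl_into_rtrancl step.intros)

lemma steps_App: "(step b)\<^sup>*\<^sup>* M M' \<Longrightarrow> (step b)\<^sup>*\<^sup>* N N' \<Longrightarrow> (step b)\<^sup>*\<^sup>* (App M N) (App M' N')"
  by (meson steps_cong(1,2) rtranclp_trans)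

lemma leads_step_mono_rel: "leads_step R M N \<Longrightarrow> (\<And>a b. R a b \<Longrightarrow> Q a b) \<Longrightarrow> leads_step Q M N"
  using leads_step_mono[of R Q] by blast

lemma leads_inf_red: "leads M N \<Longrightarrow> inf_red M N"
  by (rule inf_red.intros[OF rtranclp.rtrancl_refl])

lemma leads_step_lift:
  assumes "leads_step R M N" and "\<And>k M N. R M N \<Longrightarrow> Q (lift k M) (lift k N)"
  shows "leads_step Q (lift k M) (lift k N)"
  using assms(1) by (induction arbitrary: k rule: leads_step.induct) (simp_all add: leads_step.intros assms(2))

lemma inf_red_lift: "inf_red M N \<Longrightarrow> inf_red (lift k M) (lift k N)"
proof (coinduction arbitrary: k M N rule: inf_red.coinduct)
  case (inf_red k M N)
  then obtain M' where M': "red\<^sup>*\<^sup>* M M'" "leads M' N" by (cases rule: inf_red.cases) auto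
  have "leads_step (\<lambda>x y. (\<exists>k M N. x = lift k M \<and> y = lift k N \<and> inf_red M N) \<or> inf_red x y)
      (lift k M') (lift k N)"
    by (rule leads_step_lift[OF M'(2)]) blast
  with steps_lift[OF M'(1)] show ?case by blast
qed

lemma leads_lift: "leads M N \<Longrightarrow> leads (lift k M) (lift k N)"
  by (erule leads_step_lift) (rule inf_red_lift)

text \<open>The reduction prefix is needed because \<open>N \<Rightarrow> N'\<close> only gives \<open>N \<rightarrow>\<^sup>* N\<^sub>1 \<leadsto> N'\<close>, and these
  steps of \<open>N\<close> have to be performed at every occurrence of the variable outside boxes.\<close>
lemma leads_step_subst_inf_red:
  assumes "leads_step R A A'" and "inf_red N N'"
    and "\<And>k N N' A A'. inf_red N N' \<Longrightarrow> R A A' \<Longrightarrow> Q (subst k N A) (subst k N' A')"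
    and "\<And>x y. inf_red x y \<Longrightarrow> Q x y"
  shows "\<exists>T. red\<^sup>*\<^sup>* (subst k N A) T \<and> leads_step Q T (subst k N' A')"
  using assms(1,2)
proof (induction arbitrary: k N N' rule: leads_step.induct)
  case (1 x)
  show ?case
  proof (cases "x = k")
    case True
    from 1 obtain N1 where "red\<^sup>*\<^sup>* N N1" "leads N1 N'" by (cases rule: inf_red.cases) auto
    with True show ?thesis by (auto intro: leads_step_mono_rel assms(4))
  qed (auto intro: leads_step.intros)
next
  case (2 A1 A2 B1 B2)
  then obtain T1 T2 where "red\<^sup>*\<^sup>* (subst k N A1) T1" "leads_step Q T1 (subst k N' A2)"
    "red\<^sup>*\<^sup>* (subst k N B1) T2" "leads_step Q T2 (subst k N' B2)"
    by blast
  then show ?case by (auto intro!: exI[of _ "App T1 T2"] steps_App leads_step.intros)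
next
  case (3 A1 A2)
  then obtain T where "red\<^sup>*\<^sup>* (subst (Suc k) (lift 0 N) A1) T"
      "leads_step Q T (subst (Suc k) (lift 0 N') A2)"
    by (meson inf_red_lift)
  then show ?case by (auto intro!: exI[of _ "Lam T"] steps_cong leads_step.intros)
next
  case (4 A1 A2)
  then obtain T where "red\<^sup>*\<^sup>* (subst (Suc k) (lift 0 N) A1) T"
      "leads_step Q T (subst (Suc k) (lift 0 N') A2)"
    by (meson inf_red_lift)
  then show ?case by (auto intro!: exI[of _ "LamI T"] steps_cong leads_step.intros)
next
  case (5 A1 A2)
  then obtain T where "red\<^sup>*\<^sup>* (subst (Suc k) (lift 0 N) A1) T"
      "leads_step Q T (subst (Suc k) (lift 0 N') A2)"
    by (meson inf_red_lift)
  then show ?case by (auto intro!: exI[of _ "LamC T"] steps_cong leads_step.intros)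
next
  case (6 A1 A2)
  then obtain T where "red\<^sup>*\<^sup>* (subst k N A1) T" "leads_step Q T (subst k N' A2)" by blast
  then show ?case by (auto intro!: exI[of _ "BoxI T"] steps_cong leads_step.intros)
next
  case (7 A1 A2)
  then show ?case by (auto intro!: exI[of _ "BoxC (subst k N A1)"] leads_step.intros assms(3))
qed

lemma inf_red_subst: "inf_red A A' \<Longrightarrow> inf_red N N' \<Longrightarrow> inf_red (subst k N A) (subst k N' A')"
proof (coinduction arbitrary: k N N' A A' rule: inf_red.coinduct)
  case (inf_red k N N' A A')
  let ?Q = "\<lambda>x y. (\<exists>k N N' A A'. x = subst k N A \<and> y = subst k N' A' \<and> inf_red A A' \<and> inf_red N N')
    \<or> inf_red x y"
  from inf_red(1) obtain A1 where A1: "red\<^sup>*\<^sup>* A A1" "leads A1 A'" by (cases rule: inf_red.cases) auto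
  have "\<exists>T. red\<^sup>*\<^sup>* (subst k N A1) T \<and> leads_step ?Q T (subst k N' A')"
    by (rule leads_step_subst_inf_red[OF A1(2) inf_red(2)]) blast+
  with steps_subst[OF A1(1)] show ?case by (meson rtranclp_trans)
qed

lemma leads_subst: "leads A' A \<Longrightarrow> leads B' B \<Longrightarrow> leads (subst k B' A') (subst k B A)"
  by (induction arbitrary: k B' B rule: leads_step.induct)
    (auto intro!: leads_step.intros intro: leads_lift inf_red_subst leads_inf_red)

lemma ty_unfold: "ty \<Gamma> M \<Longrightarrow> ty_step ty \<Gamma> M"
  by (erule ty.cases) simp

lemma ext_0[simp]: "ext p \<Gamma> 0 = Some p" and ext_Suc[simp]: "ext p \<Gamma> (Suc k) = \<Gamma> k"
  by (simp_all add: ext_def)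

lemma app_splitD:
  "app_split \<Gamma> \<Gamma>1 \<Gamma>2 \<Longrightarrow>
     (\<Gamma> y \<in> {Some PLin, Some PDown} \<longrightarrow>
        (\<Gamma>1 y = \<Gamma> y \<and> \<Gamma>2 y = None) \<or> (\<Gamma>1 y = None \<and> \<Gamma>2 y = \<Gamma> y)) \<and>
     (\<Gamma> y \<notin> {Some PLin, Some PDown} \<longrightarrow> \<Gamma>1 y = \<Gamma> y \<and> \<Gamma>2 y = \<Gamma> y)"
  unfolding app_split_def by blast

lemma app_split_sym: "app_split \<Gamma> \<Gamma>1 \<Gamma>2 \<Longrightarrow> app_split \<Gamma> \<Gamma>2 \<Gamma>1"
  unfolding app_split_def by blast

abbreviation discardable_pats :: "pat option set" where
  "discardable_pats \<equiv> {None, Some PHash, Some PUp, Some PDag}"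

definition linear_pats :: "pat option set" where
  "linear_pats = {Some PLin, Some PDown}"

lemma pat_option_cases[case_names None Lin Down Up Hash Dag]:
  obtains "x = None" | "x = Some PLin" | "x = Some PDown" | "x = Some PUp" | "x = Some PHash" | "x = Some PDag"
proof (cases x)
  case (Some a) then show ?thesis using that by (cases a) auto
qed (use that in auto)

definition boxi_premise :: "env \<Rightarrow> env" where
  "boxi_premise G y = (case G y of
     Some PDown \<Rightarrow> Some PLin | Some PUp \<Rightarrow> Some PUp | Some PDag \<Rightarrow> Some PDag | _ \<Rightarrow> None)"

definition boxc_premise :: "env \<Rightarrow> env" where
  "boxc_premise G y = (case G y of Some PUp \<Rightarrow> Some PDag | Some PDag \<Rightarrow> Some PDag | _ \<Rightarrow> None)"

lemma boxi_envD: "boxi_env G D \<Longrightarrow> G y \<noteq> Some PLin \<and> D y = boxi_premise G y"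
  unfolding boxi_env_def boxi_premise_def
  by (erule allE[of _ y]) (cases "G y" rule: pat_option_cases; simp)

lemma boxi_envI: "(\<And>y. G y \<noteq> Some PLin) \<Longrightarrow> boxi_env G (boxi_premise G)"
  unfolding boxi_env_def boxi_premise_def by (auto split: option.splits pat.splits)

lemma boxc_envD: "boxc_env G D \<Longrightarrow> G y \<in> discardable_pats \<and> D y = boxc_premise G y"
  unfolding boxc_env_def boxc_premise_def
  by (erule allE[of _ y]) (cases "G y" rule: pat_option_cases; simp)

lemma boxc_envI: "(\<And>y. G y \<in> discardable_pats) \<Longrightarrow> boxc_env G (boxc_premise G)"
  unfolding boxc_env_def boxc_premise_def by (auto split: option.splits pat.splits)

lemma var_envD: "var_env p x \<Gamma> \<Longrightarrow> \<Gamma> x = Some p \<and> (y \<noteq> x \<longrightarrow> \<Gamma> y \<in> discardable_pats)"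
  unfolding var_env_def by blast

lemma ty_step_mono_rel: "ty_step R \<Gamma> M \<Longrightarrow> (\<And>\<Delta> N. R \<Delta> N \<Longrightarrow> Q \<Delta> N) \<Longrightarrow> ty_step Q \<Gamma> M"
  using ty_step_mono[of R Q] by blast

inductive_cases ty_step_AppE: "ty_step R \<Gamma> (App A B)"
inductive_cases ty_step_LamE: "ty_step R \<Gamma> (Lam A)"
inductive_cases ty_step_LamIE: "ty_step R \<Gamma> (LamI A)"
inductive_cases ty_step_LamCE: "ty_step R \<Gamma> (LamC A)"
inductive_cases ty_step_BoxIE: "ty_step R \<Gamma> (BoxI A)"
inductive_cases ty_step_BoxCE: "ty_step R \<Gamma> (BoxC A)"

section \<open>Commutation\<close>

inductive guarded :: "nat \<Rightarrow> trm \<Rightarrow> bool" where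
  "j \<noteq> k \<Longrightarrow> guarded k (Var j)"
| "guarded k A \<Longrightarrow> guarded k B \<Longrightarrow> guarded k (App A B)"
| "guarded (Suc k) A \<Longrightarrow> guarded k (Lam A)"
| "guarded (Suc k) A \<Longrightarrow> guarded k (LamI A)"
| "guarded (Suc k) A \<Longrightarrow> guarded k (LamC A)"
| "guarded k A \<Longrightarrow> guarded k (BoxI A)"
| "guarded k (BoxC A)"

inductive_cases leads_step_VarE: "leads_step R (Var x) N"
inductive_cases leads_step_AppE: "leads_step R (App A B) N"
inductive_cases leads_step_LamE: "leads_step R (Lam A) N"
inductive_cases leads_step_LamIE: "leads_step R (LamI A) N"
inductive_cases leads_step_LamCE: "leads_step R (LamC A) N"
inductive_cases leads_step_BoxIE: "leads_step R (BoxI A) N"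
inductive_cases leads_step_BoxCE: "leads_step R (BoxC A) N"

text \<open>Every occurrence of the substituted variable sits inside a coinductive box, where \<open>\<leadsto>\<close>
  requires no more than \<open>\<Rightarrow>\<close>.\<close>
lemma leads_subst_guarded:
  "guarded k A' \<Longrightarrow> leads A' A \<Longrightarrow> inf_red B' B \<Longrightarrow> leads (subst k B' A') (subst k B A)"
  by (induction arbitrary: A B' B rule: guarded.induct)
    (auto elim!: leads_step_VarE leads_step_AppE leads_step_LamE leads_step_LamIE leads_step_LamCE
      leads_step_BoxIE leads_step_BoxCE intro!: leads_step.intros simp: inf_red_lift inf_red_subst)

text \<open>No variable rule accepts \<open>\<up>x\<close>; only (mc) turns it into the usable \<open>\<dagger>x\<close>.\<close>
lemma ty_step_guarded: "ty_step R \<Gamma> A \<Longrightarrow> \<Gamma> k \<in> {None, Some PUp} \<Longrightarrow> guarded k A"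
proof (induction arbitrary: k rule: ty_step.induct)
  case (a \<Gamma> \<Gamma>1 \<Gamma>2 M N)
  then have "\<Gamma>1 k = \<Gamma> k" "\<Gamma>2 k = \<Gamma> k" using app_splitD[OF a(1), of k] by auto
  with a show ?case by (simp add: guarded.intros)
next
  case (mi \<Gamma> \<Delta> M)
  then have "\<Delta> k \<in> {None, Some PUp}" unfolding boxi_env_def by (auto dest: spec[of _ k])
  with mi show ?case by (simp add: guarded.intros)
qed (auto simp: var_env_def intro: guarded.intros)

inductive_cases leads_step_to_AppE: "leads_step R M (App A B)"
inductive_cases leads_step_to_LamE: "leads_step R M (Lam A)"
inductive_cases leads_step_to_LamIE: "leads_step R M (LamI A)"
inductive_cases leads_step_to_LamCE: "leads_step R M (LamC A)"
inductive_cases leads_step_to_BoxIE: "leads_step R M (BoxI A)"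
inductive_cases leads_step_to_BoxCE: "leads_step R M (BoxC A)"

lemma leads_basic_red_commute:
  assumes "basic_red N L" "leads M N" "ty_step ty \<Gamma> M"
  shows "\<exists>P. basic_red M P \<and> leads P L"
  using assms(1)
proof cases
  case (1 A B)
  from assms(2) obtain A' B' where "M = App (Lam A') B'" "leads A' A" "leads B' B"
    unfolding 1 by (elim leads_step_to_AppE leads_step_to_LamE) blast
  then have "basic_red M (subst 0 B' A')" "leads (subst 0 B' A') L"
    by (simp_all add: 1 basic_red.intros leads_subst)
  then show ?thesis by blast
next
  case (2 A B)
  from assms(2) obtain A' B' where "M = App (LamI A') (BoxI B')" "leads A' A" "leads B' B"
    unfolding 2 by (elim leads_step_to_AppE leads_step_to_LamIE leads_step_to_BoxIE) blast
  then have "basic_red M (subst 0 B' A')" "leads (subst 0 B' A') L"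
    by (simp_all add: 2 basic_red.intros leads_subst)
  then show ?thesis by blast
next
  case (3 A B)
  from assms(2) obtain A' B' where M: "M = App (LamC A') (BoxC B')" "leads A' A" "inf_red B' B"
    unfolding 3 by (elim leads_step_to_AppE leads_step_to_LamCE leads_step_to_BoxCE) blast
  from assms(3) obtain \<Gamma>' where "ty_step ty (ext PUp \<Gamma>') A'"
    unfolding M(1) by (elim ty_step_AppE ty_step_LamCE) blast
  then have "guarded 0 A'" by (rule ty_step_guarded) simp
  with M have "basic_red M (subst 0 B' A')" "leads (subst 0 B' A') L"
    by (simp_all add: 3 basic_red.intros leads_subst_guarded)
  then show ?thesis by blast
qed

lemma leads_red0_commute:
  "red0 N L \<Longrightarrow> leads M N \<Longrightarrow> ty_step ty \<Gamma> M \<Longrightarrow> \<exists>P. red0 M P \<and> leads P L"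
proof (induction arbitrary: M \<Gamma> rule: step.induct)
  case (root N L)
  then obtain P where "basic_red M P" "leads P L" using leads_basic_red_commute by blast
  then show ?case by (blast intro: step.root)
next
  case (appL N N' L)
  from appL(3) obtain M1 M2 where M: "M = App M1 M2" "leads M1 N" "leads M2 L"
    by (elim leads_step_to_AppE) blast
  from appL(4) obtain G where "ty_step ty G M1" unfolding M(1) by (elim ty_step_AppE) blast
  with appL(2)[OF M(2)] obtain P where "red0 M1 P" "leads P N'" by blast
  with M show ?case by (blast intro: step.appL leads_step.intros(2))
next
  case (appR N N' L)
  from appR(3) obtain M1 M2 where M: "M = App M1 M2" "leads M1 L" "leads M2 N"
    by (elim leads_step_to_AppE) blast
  from appR(4) obtain G where "ty_step ty G M2" unfolding M(1) by (elim ty_step_AppE) blast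
  with appR(2)[OF M(3)] obtain P where "red0 M2 P" "leads P N'" by blast
  with M show ?case by (blast intro: step.appR leads_step.intros(2))
next
  case (lam N N')
  from lam(3) obtain M1 where M: "M = Lam M1" "leads M1 N" by (elim leads_step_to_LamE) blast
  from lam(4) obtain G where "ty_step ty G M1" unfolding M(1) by (elim ty_step_LamE) blast
  with lam(2)[OF M(2)] obtain P where "red0 M1 P" "leads P N'" by blast
  with M show ?case by (blast intro: step.lam leads_step.intros(3))
next
  case (lamI N N')
  from lamI(3) obtain M1 where M: "M = LamI M1" "leads M1 N" by (elim leads_step_to_LamIE) blast
  from lamI(4) obtain G where "ty_step ty G M1" unfolding M(1) by (elim ty_step_LamIE) blast+
  with lamI(2)[OF M(2)] obtain P where "red0 M1 P" "leads P N'" by blast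
  with M show ?case by (blast intro: step.lamI leads_step.intros(4))
next
  case (lamC N N')
  from lamC(3) obtain M1 where M: "M = LamC M1" "leads M1 N" by (elim leads_step_to_LamCE) blast
  from lamC(4) obtain G where "ty_step ty G M1" unfolding M(1) by (elim ty_step_LamCE) blast
  with lamC(2)[OF M(2)] obtain P where "red0 M1 P" "leads P N'" by blast
  with M show ?case by (blast intro: step.lamC leads_step.intros(5))
next
  case (boxI N N')
  from boxI(3) obtain M1 where M: "M = BoxI M1" "leads M1 N" by (elim leads_step_to_BoxIE) blast
  from boxI(4) obtain G where "ty_step ty G M1" unfolding M(1) by (elim ty_step_BoxIE) blast
  with boxI(2)[OF M(2)] obtain P where "red0 M1 P" "leads P N'" by blast
  with M show ?case by (blast intro: step.boxI leads_step.intros(6))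
qed simp

section \<open>Weakening and lifting\<close>

definition weakening :: "env \<Rightarrow> env \<Rightarrow> bool" where
  "weakening E G \<longleftrightarrow> (\<forall>y. G y = E y \<or> (E y = None \<and> G y \<in> discardable_pats) \<or> (E y = Some PLin \<and> G y = Some PHash))"

lemma weakeningD: "weakening E G \<Longrightarrow> G y = E y \<or> (E y = None \<and> G y \<in> discardable_pats) \<or> (E y = Some PLin \<and> G y = Some PHash)"
  unfolding weakening_def by blast

lemma var_env_weakening:
  assumes "var_env p x \<Gamma>" "weakening \<Gamma> G"
  shows "var_env p x G \<or> (p = PLin \<and> var_env PHash x G)"
proof -
  have "G y \<in> discardable_pats" if "y \<noteq> x" for y
    using var_envD[OF assms(1), of y] weakeningD[OF assms(2), of y] that by auto
  moreover have "G x = Some p \<or> (p = PLin \<and> G x = Some PHash)"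
    using var_envD[OF assms(1), of x] weakeningD[OF assms(2), of x] by auto
  ultimately show ?thesis unfolding var_env_def by auto
qed

lemma weakening_ext: "weakening \<Gamma> G \<Longrightarrow> weakening (ext p \<Gamma>) (ext p G)"
  unfolding weakening_def ext_def by (auto split: nat.splits)

lemma weakening_app_split:
  assumes "app_split \<Gamma> \<Gamma>1 \<Gamma>2" "weakening \<Gamma> G"
  obtains G1 G2 where "app_split G G1 G2" "weakening \<Gamma>1 G1" "weakening \<Gamma>2 G2"
proof
  define G1 where "G1 y = (if G y \<in> linear_pats \<and> \<Gamma>1 y = None then None else G y)" for y
  define G2 where "G2 y = (if G y \<in> linear_pats \<and> \<Gamma>2 y = None then None else G y)" for y
  show "app_split G G1 G2" unfolding app_split_def
  proof
    fix y show "(G y \<in> {Some PLin, Some PDown} \<longrightarrow>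
        (G1 y = G y \<and> G2 y = None) \<or> (G1 y = None \<and> G2 y = G y)) \<and>
     (G y \<notin> {Some PLin, Some PDown} \<longrightarrow> G1 y = G y \<and> G2 y = G y)"
      using app_splitD[OF assms(1), of y] weakeningD[OF assms(2), of y] unfolding G1_def G2_def
      by (cases "\<Gamma> y" rule: pat_option_cases; cases "G y" rule: pat_option_cases) (auto simp: linear_pats_def)
  qed
  have "(G1 y = \<Gamma>1 y \<or> (\<Gamma>1 y = None \<and> G1 y \<in> discardable_pats) \<or> (\<Gamma>1 y = Some PLin \<and> G1 y = Some PHash)) \<and>
    (G2 y = \<Gamma>2 y \<or> (\<Gamma>2 y = None \<and> G2 y \<in> discardable_pats) \<or> (\<Gamma>2 y = Some PLin \<and> G2 y = Some PHash))" for y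
    using app_splitD[OF assms(1), of y] weakeningD[OF assms(2), of y] unfolding G1_def G2_def
    by (cases "\<Gamma> y" rule: pat_option_cases; cases "G y" rule: pat_option_cases) (auto simp: linear_pats_def)
  then show "weakening \<Gamma>1 G1" "weakening \<Gamma>2 G2" unfolding weakening_def by blast+
qed

lemma weakening_boxi_env:
  assumes "boxi_env \<Gamma> \<Delta>" "weakening \<Gamma> G"
  obtains \<Delta>' where "boxi_env G \<Delta>'" "weakening \<Delta> \<Delta>'"
proof
  have "G y \<noteq> Some PLin" for y
    using boxi_envD[OF assms(1), of y] weakeningD[OF assms(2), of y] by auto
  then show "boxi_env G (boxi_premise G)" by (rule boxi_envI)
  show "weakening \<Delta> (boxi_premise G)" unfolding weakening_def
  proof
    fix y show "boxi_premise G y = \<Delta> y \<or> (\<Delta> y = None \<and> boxi_premise G y \<in> discardable_pats) \<or>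
      (\<Delta> y = Some PLin \<and> boxi_premise G y = Some PHash)"
      using boxi_envD[OF assms(1), of y] weakeningD[OF assms(2), of y] unfolding boxi_premise_def
      by (cases "\<Gamma> y" rule: pat_option_cases; cases "G y" rule: pat_option_cases) auto
  qed
qed

lemma weakening_boxc_env:
  assumes "boxc_env \<Gamma> \<Delta>" "weakening \<Gamma> G"
  obtains \<Delta>' where "boxc_env G \<Delta>'" "weakening \<Delta> \<Delta>'"
proof
  have "G y \<in> discardable_pats" for y
    using boxc_envD[OF assms(1), of y] weakeningD[OF assms(2), of y] by auto
  then show "boxc_env G (boxc_premise G)" by (rule boxc_envI)
  show "weakening \<Delta> (boxc_premise G)" unfolding weakening_def
  proof
    fix y show "boxc_premise G y = \<Delta> y \<or> (\<Delta> y = None \<and> boxc_premise G y \<in> discardable_pats) \<or>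
      (\<Delta> y = Some PLin \<and> boxc_premise G y = Some PHash)"
      using boxc_envD[OF assms(1), of y] weakeningD[OF assms(2), of y] unfolding boxc_premise_def
      by (cases "\<Gamma> y" rule: pat_option_cases; cases "G y" rule: pat_option_cases) auto
  qed
qed

lemma ty_step_weakening:
  assumes "ty_step R \<Gamma> M" "weakening \<Gamma> G" "\<And>\<Delta> \<Delta>' M. R \<Delta> M \<Longrightarrow> weakening \<Delta> \<Delta>' \<Longrightarrow> Q \<Delta>' M"
  shows "ty_step Q G M"
  using assms(1,2)
proof (induction arbitrary: G rule: ty_step.induct)
  case (vl x \<Gamma>)
  with var_env_weakening show ?case by (blast intro: ty_step.vl ty_step.vd)
next
  case (vd x \<Gamma>)
  with var_env_weakening show ?case by (blast intro: ty_step.vd)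
next
  case (va x \<Gamma>)
  with var_env_weakening show ?case by (blast intro: ty_step.va)
next
  case (a \<Gamma> \<Gamma>1 \<Gamma>2 M N)
  from weakening_app_split[OF a(1,6)] obtain G1 G2
    where "app_split G G1 G2" "weakening \<Gamma>1 G1" "weakening \<Gamma>2 G2" .
  with a.IH show ?case by (blast intro: ty_step.a)
next
  case (mi \<Gamma> \<Delta> M)
  from weakening_boxi_env[OF mi(1,4)] obtain \<Delta>' where "boxi_env G \<Delta>'" "weakening \<Delta> \<Delta>'" .
  with mi.IH show ?case by (blast intro: ty_step.mi)
next
  case (mc \<Gamma> \<Delta> M)
  from weakening_boxc_env[OF mc(1,3)] obtain \<Delta>' where "boxc_env G \<Delta>'" "weakening \<Delta> \<Delta>'" .
  with mc(2) show ?case by (blast intro: ty_step.mc assms(3))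
qed (blast intro: ty_step.intros weakening_ext)+

lemma ty_weakening: "ty E N \<Longrightarrow> weakening E G \<Longrightarrow> ty G N"
proof (coinduction arbitrary: E G N rule: ty.coinduct)
  case (ty E G N)
  let ?R = "\<lambda>G N. (\<exists>E. ty E N \<and> weakening E G) \<or> ty G N"
  have "ty_step ?R G N"
    by (rule ty_step_weakening[OF ty_unfold[OF ty(1)] ty(2)]) blast
  then show ?case by (intro exI[of _ G] exI[of _ N]) simp
qed

definition env_lift :: "nat \<Rightarrow> env \<Rightarrow> env" where
  "env_lift k E i = (if i < k then E i else if i = k then None else E (i - 1))"

lemma env_lift_0_Suc[simp]: "env_lift 0 E (Suc y) = E y" and env_lift_0_0[simp]: "env_lift 0 E 0 = None"
  by (simp_all add: env_lift_def)

lemma app_split_env_lift: "app_split E E1 E2 \<Longrightarrow> app_split (env_lift k E) (env_lift k E1) (env_lift k E2)"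
  unfolding app_split_def env_lift_def by simp

lemma boxi_env_env_lift: "boxi_env E D \<Longrightarrow> boxi_env (env_lift k E) (env_lift k D)"
  unfolding boxi_env_def env_lift_def by simp

lemma boxc_env_env_lift: "boxc_env E D \<Longrightarrow> boxc_env (env_lift k E) (env_lift k D)"
  unfolding boxc_env_def env_lift_def by simp

lemma var_env_env_lift: "var_env p x E \<Longrightarrow> var_env p (if x < k then x else Suc x) (env_lift k E)"
  unfolding var_env_def env_lift_def by auto

lemma ext_env_lift: "ext p (env_lift k E) = env_lift (Suc k) (ext p E)"
  unfolding ext_def env_lift_def fun_eq_iff by (auto split: nat.splits)

lemma ty_step_lift:
  assumes "ty_step R E N" "\<And>D M k. R D M \<Longrightarrow> Q (env_lift k D) (lift k M)"
  shows "ty_step Q (env_lift k E) (lift k N)"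
  using assms(1)
proof (induction arbitrary: k rule: ty_step.induct)
  case (vl x \<Gamma>) then show ?case by (simp add: ty_step.vl var_env_env_lift)
next
  case (vd x \<Gamma>) then show ?case by (simp add: ty_step.vd var_env_env_lift)
next
  case (va x \<Gamma>) then show ?case by (simp add: ty_step.va var_env_env_lift)
next
  case (a \<Gamma> \<Gamma>1 \<Gamma>2 M N)
  show ?case by (simp, rule ty_step.a[OF app_split_env_lift[OF a(1)] a.IH(1) a.IH(2)])
next
  case (ll \<Gamma> M) show ?case by (simp, rule ty_step.ll, simp add: ext_env_lift ll.IH)
next
  case (li1 \<Gamma> M) show ?case by (simp, rule ty_step.li1, simp add: ext_env_lift li1.IH)
next
  case (li2 \<Gamma> M) show ?case by (simp, rule ty_step.li2, simp add: ext_env_lift li2.IH)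
next
  case (lc \<Gamma> M) show ?case by (simp, rule ty_step.lc, simp add: ext_env_lift lc.IH)
next
  case (mi \<Gamma> \<Delta> M) show ?case by (simp, rule ty_step.mi[OF boxi_env_env_lift[OF mi(1)] mi.IH])
next
  case (mc \<Gamma> \<Delta> M) show ?case
      by (simp, rule ty_step.mc[where R=Q, OF boxc_env_env_lift[OF mc(1)] assms(2)[OF mc(2)]])
qed

lemma ty_lift: "ty E N \<Longrightarrow> ty (env_lift k E) (lift k N)"
proof (coinduction arbitrary: E N k rule: ty.coinduct)
  case (ty E N k)
  let ?R = "\<lambda>G M. (\<exists>E N k. G = env_lift k E \<and> M = lift k N \<and> ty E N) \<or> ty G M"
  have "ty_step ?R (env_lift k E) (lift k N)"
    by (rule ty_step_lift[OF ty_unfold[OF ty]]) blast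
  then show ?case by (intro exI[of _ "env_lift k E"] exI[of _ "lift k N"]) simp
qed

section \<open>The substitution lemma\<close>

definition env_drop :: "nat \<Rightarrow> env \<Rightarrow> env" where "env_drop k G y = G (if y < k then y else Suc y)"

definition env_merge :: "env \<Rightarrow> env \<Rightarrow> env \<Rightarrow> bool" where
  "env_merge G F \<Gamma> \<longleftrightarrow> (\<forall>y. (G y \<in> linear_pats \<and> F y = None \<and> \<Gamma> y = G y) \<or> (F y \<in> linear_pats \<and> G y = None \<and> \<Gamma> y = F y)
      \<or> (G y \<notin> linear_pats \<and> \<Gamma> y = G y \<and> (F y = None \<or> F y = G y)))"

definition env_merge_hashed :: "env \<Rightarrow> env \<Rightarrow> env \<Rightarrow> bool" where
  "env_merge_hashed G F \<Gamma> \<longleftrightarrow> (\<forall>y. (F y = Some PDown \<and> G y = None \<and> \<Gamma> y = Some PHash)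
      \<or> (F y \<noteq> Some PDown \<and> \<Gamma> y = G y \<and> (F y = None \<or> (F y = G y \<and> G y \<notin> linear_pats))))"

definition dag_covered_up :: "env \<Rightarrow> env \<Rightarrow> bool" where
  "dag_covered_up G D \<longleftrightarrow> (\<forall>y. D y = None \<or> (D y = Some PDag \<and> G y \<in> {Some PUp, Some PDag}))"

definition dag_covered :: "env \<Rightarrow> env \<Rightarrow> bool" where
  "dag_covered G D \<longleftrightarrow> (\<forall>y. D y = None \<or> (D y = Some PDag \<and> G y = Some PDag))"

text \<open>\<open>subst_env GM k N \<Gamma>\<close>: whenever \<open>M\<close> is typed in \<open>GM\<close>, \<open>subst k N M\<close> is typed in \<open>\<Gamma>\<close>.
  The context of \<open>N\<close> enters according to the pattern of \<open>k\<close>: not at all if \<open>k\<close> is unused;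
  joined as in rule (a) if \<open>k\<close> is linear; through the box \<open>\<down>N\<close> if \<open>k\<close> is \<open>\<down>k\<close> or \<open>#k\<close>, where
  for \<open>#k\<close> the \<open>\<down>\<close>-variables of the box become \<open>#\<close> since \<open>N\<close> may be copied; and for \<open>\<up>k\<close>,
  \<open>\<dagger>k\<close> only \<open>\<dagger>\<close>-variables of \<open>N\<close> occur, which must already be available.\<close>
definition subst_env :: "env \<Rightarrow> nat \<Rightarrow> trm \<Rightarrow> env \<Rightarrow> bool" where
  "subst_env GM k N \<Gamma> \<longleftrightarrow>
    (GM k = None \<and> \<Gamma> = env_drop k GM) \<or>
    (GM k = Some PLin \<and> (\<exists>E. ty E N \<and> env_merge (env_drop k GM) E \<Gamma>)) \<or>
    (GM k = Some PDown \<and> (\<exists>E F. ty E N \<and> boxi_env F E \<and> env_merge (env_drop k GM) F \<Gamma>)) \<or>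
    (GM k = Some PHash \<and> (\<exists>E F. ty E N \<and> boxi_env F E \<and> env_merge_hashed (env_drop k GM) F \<Gamma>)) \<or>
    (GM k = Some PUp \<and> \<Gamma> = env_drop k GM \<and> (\<exists>D. ty D N \<and> dag_covered_up (env_drop k GM) D)) \<or>
    (GM k = Some PDag \<and> \<Gamma> = env_drop k GM \<and> (\<exists>D. ty D N \<and> dag_covered (env_drop k GM) D))"

lemma env_drop_ext: "env_drop (Suc k) (ext p G) = ext p (env_drop k G)"
  unfolding env_drop_def ext_def fun_eq_iff by (auto split: nat.splits)

lemma env_drop_0_ext[simp]: "env_drop 0 (ext p G) = G"
  unfolding env_drop_def ext_def by simp

lemma env_merge_ext: "env_merge G F \<Gamma> \<Longrightarrow> env_merge (ext p G) (env_lift 0 F) (ext p \<Gamma>)"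
  unfolding env_merge_def by (rule allI, case_tac y) auto

lemma env_merge_hashed_ext: "env_merge_hashed G F \<Gamma> \<Longrightarrow> env_merge_hashed (ext p G) (env_lift 0 F) (ext p \<Gamma>)"
  unfolding env_merge_hashed_def by (rule allI, case_tac y) auto

lemma dag_covered_up_ext: "dag_covered_up G D \<Longrightarrow> dag_covered_up (ext p G) (env_lift 0 D)"
  unfolding dag_covered_up_def by (rule allI, case_tac y) auto

lemma dag_covered_ext: "dag_covered G D \<Longrightarrow> dag_covered (ext p G) (env_lift 0 D)"
  unfolding dag_covered_def by (rule allI, case_tac y) auto

lemma subst_env_ext: "subst_env GM k N \<Gamma> \<Longrightarrow> subst_env (ext p GM) (Suc k) (lift 0 N) (ext p \<Gamma>)"
  unfolding subst_env_def env_drop_ext ext_Suc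
  using env_merge_ext env_merge_hashed_ext dag_covered_up_ext dag_covered_ext boxi_env_env_lift[of _ _ 0] ty_lift[of _ N 0]
  by (elim disjE; (elim conjE exE)?) (auto 0 0; blast)+

lemma app_split_env_drop: "app_split GM GM1 GM2 \<Longrightarrow> app_split (env_drop k GM) (env_drop k GM1) (env_drop k GM2)"
  unfolding app_split_def env_drop_def by blast

lemma env_merge_app_split:
  assumes "app_split G G1 G2" "env_merge G F \<Gamma>"
  shows "app_split \<Gamma> (\<lambda>y. if \<Gamma> y \<in> linear_pats \<and> G2 y \<noteq> None then None else \<Gamma> y) G2 \<and>
         env_merge G1 F (\<lambda>y. if \<Gamma> y \<in> linear_pats \<and> G2 y \<noteq> None then None else \<Gamma> y)"
  unfolding app_split_def env_merge_def
  apply (rule conjI; rule allI)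
  subgoal for y using app_splitD[OF assms(1), of y] assms(2)[unfolded env_merge_def, THEN spec, of y]
      unfolding linear_pats_def
    by (cases "G y" rule: pat_option_cases; cases "F y" rule: pat_option_cases) auto
  subgoal for y using app_splitD[OF assms(1), of y] assms(2)[unfolded env_merge_def, THEN spec, of y]
      unfolding linear_pats_def
    by (cases "G y" rule: pat_option_cases; cases "F y" rule: pat_option_cases) auto
  done

lemma env_merge_hashed_app_split:
  assumes "app_split G G1 G2" "env_merge_hashed G F \<Gamma>"
  shows "app_split \<Gamma> (\<lambda>y. if F y = Some PDown then Some PHash else G1 y) (\<lambda>y. if F y = Some PDown then Some PHash else G2 y) \<and>
         env_merge_hashed G1 F (\<lambda>y. if F y = Some PDown then Some PHash else G1 y) \<and>
         env_merge_hashed G2 F (\<lambda>y. if F y = Some PDown then Some PHash else G2 y)"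
  unfolding app_split_def env_merge_hashed_def
  apply (rule conjI; (rule conjI)?; rule allI)
  subgoal for y using app_splitD[OF assms(1), of y]
      assms(2)[unfolded env_merge_hashed_def, THEN spec, of y] unfolding linear_pats_def
    by (cases "G y" rule: pat_option_cases; cases "F y" rule: pat_option_cases) auto
  subgoal for y using app_splitD[OF assms(1), of y]
      assms(2)[unfolded env_merge_hashed_def, THEN spec, of y] unfolding linear_pats_def
    by (cases "G y" rule: pat_option_cases; cases "F y" rule: pat_option_cases) auto
  subgoal for y using app_splitD[OF assms(1), of y]
      assms(2)[unfolded env_merge_hashed_def, THEN spec, of y] unfolding linear_pats_def
    by (cases "G y" rule: pat_option_cases; cases "F y" rule: pat_option_cases) auto
  done

lemma dag_covered_up_app_split:
  assumes "app_split G G1 G2" "dag_covered_up G D" shows "dag_covered_up G1 D \<and> dag_covered_up G2 D"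
proof -
  have "D y = None \<or> (D y = Some PDag \<and> G1 y \<in> {Some PUp, Some PDag} \<and> G2 y \<in> {Some PUp, Some PDag})" for y
    using app_splitD[OF assms(1), of y] assms(2)[unfolded dag_covered_up_def, THEN spec, of y] by auto
  then show ?thesis unfolding dag_covered_up_def by blast
qed

lemma dag_covered_app_split:
  assumes "app_split G G1 G2" "dag_covered G D" shows "dag_covered G1 D \<and> dag_covered G2 D"
proof -
  have "D y = None \<or> (D y = Some PDag \<and> G1 y = Some PDag \<and> G2 y = Some PDag)" for y
    using app_splitD[OF assms(1), of y] assms(2)[unfolded dag_covered_def, THEN spec, of y] by auto
  then show ?thesis unfolding dag_covered_def by blast
qed

lemma subst_env_app:
  assumes as: "app_split GM GM1 GM2" and sc: "subst_env GM k N \<Gamma>"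
  shows "\<exists>\<Gamma>1 \<Gamma>2. app_split \<Gamma> \<Gamma>1 \<Gamma>2 \<and> subst_env GM1 k N \<Gamma>1 \<and> subst_env GM2 k N \<Gamma>2"
proof -
  have ad: "app_split (env_drop k GM) (env_drop k GM1) (env_drop k GM2)"
      by (rule app_split_env_drop[OF as])
  have ak: "(GM k \<in> {Some PLin, Some PDown} \<longrightarrow>
        (GM1 k = GM k \<and> GM2 k = None) \<or> (GM1 k = None \<and> GM2 k = GM k)) \<and>
     (GM k \<notin> {Some PLin, Some PDown} \<longrightarrow> GM1 k = GM k \<and> GM2 k = GM k)" by (rule app_splitD[OF as])
  from sc[unfolded subst_env_def] show ?thesis
  proof (elim disjE conjE exE)
    assume "GM k = None" "\<Gamma> = env_drop k GM"
    then show ?thesis using ad ak unfolding subst_env_def by auto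
  next
    fix E assume h: "GM k = Some PLin" "ty E N" "env_merge (env_drop k GM) E \<Gamma>"
    show ?thesis
    proof (cases "GM1 k = Some PLin")
      case True
      with ak h have "GM2 k = None" by auto
      with env_merge_app_split[OF ad h(3)] True h(2) show ?thesis unfolding subst_env_def by blast
    next
      case False
      with ak h have "GM2 k = Some PLin" "GM1 k = None" by auto
      with env_merge_app_split[OF app_split_sym[OF ad] h(3)] h(2) show ?thesis unfolding subst_env_def
        by (blast intro: app_split_sym)
    qed
  next
    fix E F assume h: "GM k = Some PDown" "ty E N" "boxi_env F E" "env_merge (env_drop k GM) F \<Gamma>"
    show ?thesis
    proof (cases "GM1 k = Some PDown")
      case True
      with ak h have "GM2 k = None" by auto
      with env_merge_app_split[OF ad h(4)] True h(2,3) show ?thesis unfolding subst_env_def by blast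
    next
      case False
      with ak h have "GM2 k = Some PDown" "GM1 k = None" by auto
      with env_merge_app_split[OF app_split_sym[OF ad] h(4)] h(2,3) show ?thesis unfolding subst_env_def
        by (blast intro: app_split_sym)
    qed
  next
    fix E F assume h: "GM k = Some PHash" "ty E N" "boxi_env F E" "env_merge_hashed (env_drop k GM) F \<Gamma>"
    with ak have "GM1 k = Some PHash" "GM2 k = Some PHash" by auto
    with env_merge_hashed_app_split[OF ad h(4)] h(2,3) show ?thesis unfolding subst_env_def by blast
  next
    fix D assume h: "GM k = Some PUp" "\<Gamma> = env_drop k GM" "ty D N" "dag_covered_up (env_drop k GM) D"
    with ak have "GM1 k = Some PUp" "GM2 k = Some PUp" by auto
    with dag_covered_up_app_split[OF ad h(4)] h ad show ?thesis unfolding subst_env_def by blast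
  next
    fix D assume h: "GM k = Some PDag" "\<Gamma> = env_drop k GM" "ty D N" "dag_covered (env_drop k GM) D"
    with ak have "GM1 k = Some PDag" "GM2 k = Some PDag" by auto
    with dag_covered_app_split[OF ad h(4)] h ad show ?thesis unfolding subst_env_def by blast
  qed
qed

lemma boxi_env_env_drop: "boxi_env GM DM \<Longrightarrow> boxi_env (env_drop k GM) (env_drop k DM)"
  unfolding boxi_env_def env_drop_def by blast

lemma boxc_env_env_drop: "boxc_env GM DM \<Longrightarrow> boxc_env (env_drop k GM) (env_drop k DM)"
  unfolding boxc_env_def env_drop_def by blast

lemma boxi_env_eq_premise: "boxi_env GM DM \<Longrightarrow> DM = boxi_premise GM"
  using boxi_envD by blast

lemma boxc_env_eq_premise: "boxc_env GM DM \<Longrightarrow> DM = boxc_premise GM"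
  using boxc_envD by blast

lemma env_drop_boxi_premise: "env_drop k (boxi_premise G) = boxi_premise (env_drop k G)"
  unfolding env_drop_def boxi_premise_def by auto

lemma env_drop_boxc_premise: "env_drop k (boxc_premise G) = boxc_premise (env_drop k G)"
  unfolding env_drop_def boxc_premise_def by auto

lemma env_merge_boxi:
  assumes "boxi_env F E" "\<And>y. G y \<noteq> Some PLin" "env_merge G F \<Gamma>"
  shows "(\<forall>y. \<Gamma> y \<noteq> Some PLin) \<and> env_merge (boxi_premise G) E (boxi_premise \<Gamma>)"
  unfolding env_merge_def
  apply (rule conjI; rule allI)
  subgoal for y using boxi_envD[OF assms(1), of y] assms(2)[of y]
      assms(3)[unfolded env_merge_def, THEN spec, of y] unfolding linear_pats_def boxi_premise_def
    by (cases "G y" rule: pat_option_cases; cases "F y" rule: pat_option_cases) auto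
  subgoal for y using boxi_envD[OF assms(1), of y] assms(2)[of y]
      assms(3)[unfolded env_merge_def, THEN spec, of y] unfolding linear_pats_def boxi_premise_def
    by (cases "G y" rule: pat_option_cases; cases "F y" rule: pat_option_cases) auto
  done

lemma env_merge_hashed_boxi:
  assumes "boxi_env F E" "\<And>y. G y \<noteq> Some PLin" "env_merge_hashed G F \<Gamma>"
  shows "(\<forall>y. \<Gamma> y \<noteq> Some PLin) \<and> boxi_premise \<Gamma> = boxi_premise G"
  unfolding fun_eq_iff
  apply (rule conjI; rule allI)
  subgoal for y using boxi_envD[OF assms(1), of y] assms(2)[of y]
      assms(3)[unfolded env_merge_hashed_def, THEN spec, of y] unfolding linear_pats_def boxi_premise_def
    by (cases "G y" rule: pat_option_cases; cases "F y" rule: pat_option_cases) auto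
  subgoal for y using boxi_envD[OF assms(1), of y] assms(2)[of y]
      assms(3)[unfolded env_merge_hashed_def, THEN spec, of y] unfolding linear_pats_def boxi_premise_def
    by (cases "G y" rule: pat_option_cases; cases "F y" rule: pat_option_cases) auto
  done

lemma env_merge_hashed_boxc:
  assumes "boxi_env F E" "\<And>y. G y \<in> discardable_pats" "env_merge_hashed G F \<Gamma>"
  shows "(\<forall>y. \<Gamma> y \<in> discardable_pats) \<and> boxc_premise \<Gamma> = boxc_premise G"
  unfolding fun_eq_iff
  apply (rule conjI; rule allI)
  subgoal for y using boxi_envD[OF assms(1), of y] assms(2)[of y]
      assms(3)[unfolded env_merge_hashed_def, THEN spec, of y] unfolding linear_pats_def boxc_premise_def
    by (cases "G y" rule: pat_option_cases; cases "F y" rule: pat_option_cases) auto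
  subgoal for y using boxi_envD[OF assms(1), of y] assms(2)[of y]
      assms(3)[unfolded env_merge_hashed_def, THEN spec, of y] unfolding linear_pats_def boxc_premise_def
    by (cases "G y" rule: pat_option_cases; cases "F y" rule: pat_option_cases) auto
  done

lemma dag_covered_up_boxi: "dag_covered_up G D \<Longrightarrow> dag_covered_up (boxi_premise G) D"
  unfolding dag_covered_up_def boxi_premise_def by (auto split: option.splits pat.splits)
lemma dag_covered_boxi: "dag_covered G D \<Longrightarrow> dag_covered (boxi_premise G) D"
  unfolding dag_covered_def boxi_premise_def by (auto split: option.splits pat.splits)
lemma dag_covered_up_boxc: "dag_covered_up G D \<Longrightarrow> dag_covered (boxc_premise G) D"
  unfolding dag_covered_up_def dag_covered_def boxc_premise_def by (auto split: option.splits pat.splits)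
lemma dag_covered_boxc: "dag_covered G D \<Longrightarrow> dag_covered (boxc_premise G) D"
  unfolding dag_covered_def boxc_premise_def by (auto split: option.splits pat.splits)

lemma subst_env_boxi:
  assumes bx: "boxi_env GM DM" and sc: "subst_env GM k N \<Gamma>"
  shows "\<exists>D\<Gamma>. boxi_env \<Gamma> D\<Gamma> \<and> subst_env DM k N D\<Gamma>"
proof -
  have DM: "DM = boxi_premise GM" by (rule boxi_env_eq_premise[OF bx])
  have nl: "GM y \<noteq> Some PLin" for y using boxi_envD[OF bx] by blast
  have nl': "env_drop k GM y \<noteq> Some PLin" for y using nl unfolding env_drop_def by blast
  have dd: "env_drop k DM = boxi_premise (env_drop k GM)" unfolding DM env_drop_boxi_premise ..
  from sc[unfolded subst_env_def] show ?thesis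
  proof (elim disjE conjE exE)
    assume "GM k = None" "\<Gamma> = env_drop k GM"
    then show ?thesis using boxi_env_env_drop[OF bx, of k]
        unfolding subst_env_def DM boxi_premise_def by auto
  next
    fix E assume "GM k = Some PLin" then show ?thesis using nl by blast
  next
    fix E F assume h: "GM k = Some PDown" "ty E N" "boxi_env F E" "env_merge (env_drop k GM) F \<Gamma>"
    from env_merge_boxi[OF h(3) nl' h(4)]
        have c: "\<forall>y. \<Gamma> y \<noteq> Some PLin" "env_merge (boxi_premise (env_drop k GM)) E (boxi_premise \<Gamma>)"
        by auto
    have "DM k = Some PLin" using h(1) unfolding DM boxi_premise_def by simp
    then show ?thesis using boxi_envI[of \<Gamma>] c h(2) unfolding subst_env_def dd by blast
  next
    fix E F assume h: "GM k = Some PHash" "ty E N" "boxi_env F E" "env_merge_hashed (env_drop k GM) F \<Gamma>"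
    from env_merge_hashed_boxi[OF h(3) nl' h(4)]
        have c: "\<forall>y. \<Gamma> y \<noteq> Some PLin" "boxi_premise \<Gamma> = boxi_premise (env_drop k GM)" by auto
    have "DM k = None" using h(1) unfolding DM boxi_premise_def by simp
    then show ?thesis using boxi_envI[of \<Gamma>] c unfolding subst_env_def dd by metis
  next
    fix D assume h: "GM k = Some PUp" "\<Gamma> = env_drop k GM" "ty D N" "dag_covered_up (env_drop k GM) D"
    have "DM k = Some PUp" using h(1) unfolding DM boxi_premise_def by simp
    then show ?thesis using boxi_env_env_drop[OF bx, of k] h dag_covered_up_boxi[OF h(4)]
        unfolding subst_env_def dd by auto
  next
    fix D assume h: "GM k = Some PDag" "\<Gamma> = env_drop k GM" "ty D N" "dag_covered (env_drop k GM) D"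
    have "DM k = Some PDag" using h(1) unfolding DM boxi_premise_def by simp
    then show ?thesis using boxi_env_env_drop[OF bx, of k] h dag_covered_boxi[OF h(4)]
        unfolding subst_env_def dd by auto
  qed
qed

lemma subst_env_boxc:
  assumes bx: "boxc_env GM DM" and sc: "subst_env GM k N \<Gamma>"
  shows "\<exists>D\<Gamma>. boxc_env \<Gamma> D\<Gamma> \<and> subst_env DM k N D\<Gamma>"
proof -
  have DM: "DM = boxc_premise GM" by (rule boxc_env_eq_premise[OF bx])
  have nl: "GM y \<in> discardable_pats" for y using boxc_envD[OF bx] by blast
  have nl': "env_drop k GM y \<in> discardable_pats" for y using nl unfolding env_drop_def by blast
  have dd: "env_drop k DM = boxc_premise (env_drop k GM)" unfolding DM env_drop_boxc_premise ..
  from sc[unfolded subst_env_def] show ?thesis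
  proof (elim disjE conjE exE)
    assume "GM k = None" "\<Gamma> = env_drop k GM"
    then show ?thesis using boxc_env_env_drop[OF bx, of k]
        unfolding subst_env_def DM boxc_premise_def by auto
  next
    fix E assume "GM k = Some PLin" then show ?thesis using nl[of k] by simp
  next
    fix E F assume "GM k = Some PDown" then show ?thesis using nl[of k] by simp
  next
    fix E F assume h: "GM k = Some PHash" "ty E N" "boxi_env F E" "env_merge_hashed (env_drop k GM) F \<Gamma>"
    from env_merge_hashed_boxc[OF h(3) nl' h(4)]
        have c: "\<forall>y. \<Gamma> y \<in> discardable_pats" "boxc_premise \<Gamma> = boxc_premise (env_drop k GM)" by auto
    have "DM k = None" using h(1) unfolding DM boxc_premise_def by simp
    then show ?thesis using boxc_envI[of \<Gamma>] c unfolding subst_env_def dd by metis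
  next
    fix D assume h: "GM k = Some PUp" "\<Gamma> = env_drop k GM" "ty D N" "dag_covered_up (env_drop k GM) D"
    have "DM k = Some PDag" using h(1) unfolding DM boxc_premise_def by simp
    then show ?thesis using boxc_env_env_drop[OF bx, of k] h dag_covered_up_boxc[OF h(4)]
        unfolding subst_env_def dd by auto
  next
    fix D assume h: "GM k = Some PDag" "\<Gamma> = env_drop k GM" "ty D N" "dag_covered (env_drop k GM) D"
    have "DM k = Some PDag" using h(1) unfolding DM boxc_premise_def by simp
    then show ?thesis using boxc_env_env_drop[OF bx, of k] h dag_covered_boxc[OF h(4)]
        unfolding subst_env_def dd by auto
  qed
qed

lemma weakening_env_merge:
  assumes "\<And>y. G y \<in> discardable_pats" "env_merge G E \<Gamma>"
  shows "weakening E \<Gamma>"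
  unfolding weakening_def
  apply (rule allI)
  subgoal for y using assms(1)[of y] assms(2)[unfolded env_merge_def, THEN spec, of y]
      unfolding linear_pats_def
    by (cases "G y" rule: pat_option_cases; cases "E y" rule: pat_option_cases) auto
  done

lemma weakening_env_merge_hashed:
  assumes "\<And>y. G y \<in> discardable_pats" "boxi_env F E" "env_merge_hashed G F \<Gamma>"
  shows "weakening E \<Gamma>"
  unfolding weakening_def
  apply (rule allI)
  subgoal for y using assms(1)[of y] boxi_envD[OF assms(2), of y]
      assms(3)[unfolded env_merge_hashed_def, THEN spec, of y] unfolding linear_pats_def boxi_premise_def
    by (cases "G y" rule: pat_option_cases; cases "F y" rule: pat_option_cases) auto
  done

lemma weakening_dag_covered:
  assumes "\<And>y. G y \<in> discardable_pats" "dag_covered G D"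
  shows "weakening D G"
  unfolding weakening_def
  apply (rule allI)
  subgoal for y using assms(1)[of y] assms(2)[unfolded dag_covered_def, THEN spec, of y]
    by (cases "G y" rule: pat_option_cases) auto
  done

lemma var_env_env_drop:
  assumes "var_env p j G" "j \<noteq> k"
  shows "var_env p (if k < j then j - 1 else j) (env_drop k G)"
  using assms unfolding var_env_def env_drop_def by auto

lemma var_env_env_merge_hashed:
  assumes "var_env p j G" "env_merge_hashed G F \<Gamma>"
  shows "var_env p j \<Gamma>"
proof -
  have "\<Gamma> y = G y \<or> (G y = None \<and> \<Gamma> y = Some PHash)" for y
    using assms(2) unfolding env_merge_hashed_def by auto
  with assms(1) show ?thesis unfolding var_env_def by (metis insertCI option.distinct(1))
qed

lemma subst_env_var:
  assumes ve: "var_env p j GM" and p: "p \<in> {PLin, PHash, PDag}" and sc: "subst_env GM k N \<Gamma>"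
  shows "(j = k \<and> ty \<Gamma> N) \<or> (j \<noteq> k \<and> var_env p (if k < j then j - 1 else j) \<Gamma>)"
proof (cases "j = k")
  case True
  have nl: "env_drop k GM y \<in> discardable_pats" for y
  proof -
    have "(if y < k then y else Suc y) \<noteq> j" using True by auto
    then show ?thesis using ve unfolding var_env_def env_drop_def by blast
  qed
  have gk: "GM k = Some p" using ve True unfolding var_env_def by simp
  from sc[unfolded subst_env_def] have "ty \<Gamma> N"
  proof (elim disjE conjE exE)
    assume "GM k = None" then show ?thesis using gk by simp
  next
    fix E assume h: "GM k = Some PLin" "ty E N" "env_merge (env_drop k GM) E \<Gamma>"
    show ?thesis by (rule ty_weakening[OF h(2) weakening_env_merge[OF nl h(3)]])
  next
    fix E F assume "GM k = Some PDown" then show ?thesis using gk p by simp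
  next
    fix E F assume h: "GM k = Some PHash" "ty E N" "boxi_env F E" "env_merge_hashed (env_drop k GM) F \<Gamma>"
    show ?thesis by (rule ty_weakening[OF h(2) weakening_env_merge_hashed[OF nl h(3,4)]])
  next
    fix D assume "GM k = Some PUp" then show ?thesis using gk p by simp
  next
    fix D assume h: "GM k = Some PDag" "\<Gamma> = env_drop k GM" "ty D N" "dag_covered (env_drop k GM) D"
    show ?thesis unfolding h(2) by (rule ty_weakening[OF h(3) weakening_dag_covered[OF nl h(4)]])
  qed
  then show ?thesis using True by blast
next
  case False
  have gk: "GM k \<in> discardable_pats" using ve False unfolding var_env_def by auto
  have vd: "var_env p (if k < j then j - 1 else j) (env_drop k GM)"
      by (rule var_env_env_drop[OF ve False])
  from sc[unfolded subst_env_def] have "var_env p (if k < j then j - 1 else j) \<Gamma>"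
  proof (elim disjE conjE exE)
    fix E F assume h: "GM k = Some PHash" "ty E N" "boxi_env F E" "env_merge_hashed (env_drop k GM) F \<Gamma>"
    show ?thesis by (rule var_env_env_merge_hashed[OF vd h(4)])
  qed (use gk vd in auto)
  then show ?thesis using False by blast
qed

lemma ty_step_subst_Var:
  assumes "var_env p x G" "p \<in> {PLin, PHash, PDag}" "subst_env G k N \<Gamma>" "\<And>\<Delta> T. ty \<Delta> T \<Longrightarrow> Q \<Delta> T"
  shows "ty_step Q \<Gamma> (subst k N (Var x))"
proof (cases "x = k")
  case True
  with subst_env_var[OF assms(1-3)] have "ty \<Gamma> N" by blast
  with True show ?thesis using ty_step_mono_rel[OF ty_unfold assms(4)] by simp
next
  case False
  with subst_env_var[OF assms(1-3)] have "var_env p (if k < x then x - 1 else x) \<Gamma>" by blast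
  with False assms(2) show ?thesis by (auto intro: ty_step.vl ty_step.vd ty_step.va)
qed

lemma ty_step_subst:
  assumes "ty_step ty GM M" "subst_env GM k N \<Gamma>"
   and co: "\<And>GM M k N \<Gamma>. ty GM M \<Longrightarrow> subst_env GM k N \<Gamma> \<Longrightarrow> Q \<Gamma> (subst k N M)"
   and tyQ: "\<And>G T. ty G T \<Longrightarrow> Q G T"
  shows "ty_step Q \<Gamma> (subst k N M)"
  using assms(1,2)
proof (induction arbitrary: k N \<Gamma> rule: ty_step.induct)
  case (vl x G)
  show ?case by (rule ty_step_subst_Var[OF vl(1) _ vl(2) tyQ]) simp
next
  case (vd x G)
  show ?case by (rule ty_step_subst_Var[OF vd(1) _ vd(2) tyQ]) simp
next
  case (va x G)
  show ?case by (rule ty_step_subst_Var[OF va(1) _ va(2) tyQ]) simp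
next
  case (a G G1 G2 M1 M2)
  from subst_env_app[OF a(1) a(6)] obtain \<Gamma>1 \<Gamma>2 where h: "app_split \<Gamma> \<Gamma>1 \<Gamma>2" "subst_env G1 k N \<Gamma>1" "subst_env G2 k N \<Gamma>2" by blast
  show ?case by (simp only: subst_simps) (rule ty_step.a[OF h(1) a.IH(1)[OF h(2)] a.IH(2)[OF h(3)]])
next
  case (ll G M1)
  show ?case by (simp only: subst_simps) (rule ty_step.ll[OF ll.IH[OF subst_env_ext[OF ll(3)]]])
next
  case (li1 G M1)
  show ?case by (simp only: subst_simps) (rule ty_step.li1[OF li1.IH[OF subst_env_ext[OF li1(3)]]])
next
  case (li2 G M1)
  show ?case by (simp only: subst_simps) (rule ty_step.li2[OF li2.IH[OF subst_env_ext[OF li2(3)]]])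
next
  case (lc G M1)
  show ?case by (simp only: subst_simps) (rule ty_step.lc[OF lc.IH[OF subst_env_ext[OF lc(3)]]])
next
  case (mi G D M1)
  from subst_env_boxi[OF mi(1) mi(4)] obtain D\<Gamma> where h: "boxi_env \<Gamma> D\<Gamma>" "subst_env D k N D\<Gamma>" by blast
  show ?case by (simp only: subst_simps) (rule ty_step.mi[OF h(1) mi.IH[OF h(2)]])
next
  case (mc G D M1)
  from subst_env_boxc[OF mc(1) mc(3)] obtain D\<Gamma> where h: "boxc_env \<Gamma> D\<Gamma>" "subst_env D k N D\<Gamma>" by blast
  show ?case by (simp only: subst_simps) (rule ty_step.mc[where R=Q, OF h(1) co[OF mc(2) h(2)]])
qed

lemma ty_subst: "ty GM M \<Longrightarrow> subst_env GM k N \<Gamma> \<Longrightarrow> ty \<Gamma> (subst k N M)"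
proof (coinduction arbitrary: GM M k N \<Gamma> rule: ty.coinduct)
  case (ty GM M k N \<Gamma>)
  let ?R = "\<lambda>G T. (\<exists>GM M k N. T = subst k N M \<and> ty GM M \<and> subst_env GM k N G) \<or> ty G T"
  have "ty_step ?R \<Gamma> (subst k N M)"
    by (rule ty_step_subst[OF ty_unfold[OF ty(1)] ty(2)]) blast+
  then show ?case by (intro exI[of _ \<Gamma>] exI[of _ "subst k N M"]) simp
qed

section \<open>Subject reduction\<close>

definition down_to_hash :: "env \<Rightarrow> env \<Rightarrow> bool" where
  "down_to_hash \<Gamma> \<Gamma>' \<longleftrightarrow> (\<forall>y. \<Gamma>' y = \<Gamma> y \<or> (\<Gamma> y = Some PDown \<and> \<Gamma>' y = Some PHash))"

lemma down_to_hash_refl: "down_to_hash \<Gamma> \<Gamma>" unfolding down_to_hash_def by simp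

lemma app_split_env_merge: "app_split \<Gamma> \<Gamma>1 \<Gamma>2 \<Longrightarrow> env_merge \<Gamma>1 \<Gamma>2 \<Gamma>"
  unfolding env_merge_def
  apply (rule allI)
  subgoal for y using app_splitD[of \<Gamma> \<Gamma>1 \<Gamma>2 y] unfolding linear_pats_def
    by (cases "\<Gamma> y" rule: pat_option_cases) auto
  done

lemma app_split_env_merge_hashed:
  assumes "app_split \<Gamma> \<Gamma>1 \<Gamma>2" "boxi_env \<Gamma>2 E"
  shows "env_merge_hashed \<Gamma>1 \<Gamma>2 (\<lambda>y. if \<Gamma>2 y = Some PDown then Some PHash else \<Gamma> y) \<and>
         down_to_hash \<Gamma> (\<lambda>y. if \<Gamma>2 y = Some PDown then Some PHash else \<Gamma> y)"
  unfolding env_merge_hashed_def down_to_hash_def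
  apply (rule conjI; rule allI)
  subgoal for y using app_splitD[OF assms(1), of y] boxi_envD[OF assms(2), of y]
      unfolding linear_pats_def
    by (cases "\<Gamma> y" rule: pat_option_cases; cases "\<Gamma>2 y" rule: pat_option_cases) auto
  subgoal for y using app_splitD[OF assms(1), of y] boxi_envD[OF assms(2), of y]
      unfolding linear_pats_def
    by (cases "\<Gamma> y" rule: pat_option_cases; cases "\<Gamma>2 y" rule: pat_option_cases) auto
  done

lemma app_split_boxc_env:
  assumes "app_split \<Gamma> \<Gamma>1 \<Gamma>2" "boxc_env \<Gamma>2 D"
  shows "\<Gamma>1 = \<Gamma> \<and> dag_covered_up \<Gamma>1 D"
  unfolding dag_covered_up_def fun_eq_iff
  apply (rule conjI; rule allI)
  subgoal for y using app_splitD[OF assms(1), of y] boxc_envD[OF assms(2), of y]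
      unfolding boxc_premise_def
    by (cases "\<Gamma> y" rule: pat_option_cases; cases "\<Gamma>2 y" rule: pat_option_cases) auto
  subgoal for y using app_splitD[OF assms(1), of y] boxc_envD[OF assms(2), of y]
      unfolding boxc_premise_def
    by (cases "\<Gamma> y" rule: pat_option_cases; cases "\<Gamma>2 y" rule: pat_option_cases) auto
  done

text \<open>This is the only redex that changes the environment: when \<open>x\<close> is used as \<open>#x\<close>, the
  argument may be duplicated, so its \<open>\<down>\<close>-variables must become \<open>#\<close>-variables.\<close>
lemma subject_reduction_LamI_redex:
  assumes "app_split \<Gamma> \<Gamma>1 \<Gamma>2" "ty_step ty \<Gamma>1 (LamI A)" "boxi_env \<Gamma>2 E" "ty E B"
  shows "\<exists>\<Gamma>'. down_to_hash \<Gamma> \<Gamma>' \<and> ty \<Gamma>' (subst 0 B A)"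
proof -
  from assms(2) consider (hash) "ty_step ty (ext PHash \<Gamma>1) A" | (down) "ty_step ty (ext PDown \<Gamma>1) A"
    by (elim ty_step_LamIE)
  then show ?thesis
  proof cases
    case hash
    define \<Gamma>' where "\<Gamma>' = (\<lambda>y. if \<Gamma>2 y = Some PDown then Some PHash else \<Gamma> y)"
    have \<Gamma>': "env_merge_hashed \<Gamma>1 \<Gamma>2 \<Gamma>'" "down_to_hash \<Gamma> \<Gamma>'"
      using app_split_env_merge_hashed[OF assms(1,3)] unfolding \<Gamma>'_def by auto
    with assms(3,4) have "subst_env (ext PHash \<Gamma>1) 0 B \<Gamma>'" unfolding subst_env_def by auto
    with hash have "ty \<Gamma>' (subst 0 B A)" by (blast intro: ty_subst ty.intros)
    with \<Gamma>'(2) show ?thesis by blast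
  next
    case down
    from assms have "subst_env (ext PDown \<Gamma>1) 0 B \<Gamma>"
      unfolding subst_env_def by (auto intro: app_split_env_merge)
    with down have "ty \<Gamma> (subst 0 B A)" by (blast intro: ty_subst ty.intros)
    then show ?thesis using down_to_hash_refl by blast
  qed
qed

lemma subject_reduction_basic_red:
  assumes "basic_red M P" "ty_step ty \<Gamma> M"
  shows "\<exists>\<Gamma>'. down_to_hash \<Gamma> \<Gamma>' \<and> ty \<Gamma>' P"
  using assms(1)
proof cases
  case (1 A B)
  from assms(2) obtain \<Gamma>1 \<Gamma>2 where h: "app_split \<Gamma> \<Gamma>1 \<Gamma>2" "ty_step ty \<Gamma>1 (Lam A)" "ty_step ty \<Gamma>2 B"
    unfolding 1 by (elim ty_step_AppE)
  from h(2) have "ty_step ty (ext PLin \<Gamma>1) A" by (elim ty_step_LamE)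
  moreover from h have "subst_env (ext PLin \<Gamma>1) 0 B \<Gamma>"
    unfolding subst_env_def by (auto intro: ty.intros app_split_env_merge)
  ultimately have "ty \<Gamma> (subst 0 B A)" by (blast intro: ty_subst ty.intros)
  then show ?thesis unfolding 1 using down_to_hash_refl by blast
next
  case (2 A B)
  from assms(2) obtain \<Gamma>1 \<Gamma>2 where h: "app_split \<Gamma> \<Gamma>1 \<Gamma>2" "ty_step ty \<Gamma>1 (LamI A)" "ty_step ty \<Gamma>2 (BoxI B)"
    unfolding 2 by (elim ty_step_AppE)
  from h(3) obtain E where "boxi_env \<Gamma>2 E" "ty_step ty E B" by (elim ty_step_BoxIE)
  with h(1,2) show ?thesis unfolding 2 by (blast intro: subject_reduction_LamI_redex ty.intros)
next
  case (3 A B)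
  from assms(2) obtain \<Gamma>1 \<Gamma>2 where h: "app_split \<Gamma> \<Gamma>1 \<Gamma>2" "ty_step ty \<Gamma>1 (LamC A)" "ty_step ty \<Gamma>2 (BoxC B)"
    unfolding 3 by (elim ty_step_AppE)
  from h(3) obtain D where D: "boxc_env \<Gamma>2 D" "ty D B" by (elim ty_step_BoxCE)
  from h(2) have "ty_step ty (ext PUp \<Gamma>1) A" by (elim ty_step_LamCE)
  moreover have "subst_env (ext PUp \<Gamma>1) 0 B \<Gamma>"
    using app_split_boxc_env[OF h(1) D(1)] D(2) unfolding subst_env_def by auto
  ultimately have "ty \<Gamma> (subst 0 B A)" by (blast intro: ty_subst ty.intros)
  then show ?thesis unfolding 3 using down_to_hash_refl by blast
qed

lemma down_to_hash_app_split:
  assumes "app_split \<Gamma> \<Gamma>1 \<Gamma>2" "down_to_hash \<Gamma>1 \<Gamma>1'"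
  obtains \<Gamma>' \<Gamma>2' where "app_split \<Gamma>' \<Gamma>1' \<Gamma>2'" "weakening \<Gamma>2 \<Gamma>2'" "down_to_hash \<Gamma> \<Gamma>'"
proof
  let ?hashed = "\<lambda>y. \<Gamma>1 y = Some PDown \<and> \<Gamma>1' y = Some PHash"
  show "app_split (\<lambda>y. if ?hashed y then Some PHash else \<Gamma> y) \<Gamma>1' (\<lambda>y. if ?hashed y then Some PHash else \<Gamma>2 y)"
    "weakening \<Gamma>2 (\<lambda>y. if ?hashed y then Some PHash else \<Gamma>2 y)"
    "down_to_hash \<Gamma> (\<lambda>y. if ?hashed y then Some PHash else \<Gamma> y)"
    unfolding app_split_def weakening_def down_to_hash_def
    apply (rule_tac [!] allI)
    subgoal for y using app_splitD[OF assms(1), of y]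
        assms(2)[unfolded down_to_hash_def, THEN spec, of y]
      by (cases "\<Gamma> y" rule: pat_option_cases; cases "\<Gamma>1 y" rule: pat_option_cases) auto
    subgoal for y using app_splitD[OF assms(1), of y]
        assms(2)[unfolded down_to_hash_def, THEN spec, of y]
      by (cases "\<Gamma> y" rule: pat_option_cases; cases "\<Gamma>1 y" rule: pat_option_cases) auto
    subgoal for y using app_splitD[OF assms(1), of y]
        assms(2)[unfolded down_to_hash_def, THEN spec, of y]
      by (cases "\<Gamma> y" rule: pat_option_cases; cases "\<Gamma>1 y" rule: pat_option_cases) auto
    done
qed

lemma down_to_hash_ext_cases:
  assumes "down_to_hash (ext p \<Gamma>) G"
  obtains \<Gamma>' where "G = ext p \<Gamma>'" "down_to_hash \<Gamma> \<Gamma>'"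
    | \<Gamma>' where "p = PDown" "G = ext PHash \<Gamma>'" "down_to_hash \<Gamma> \<Gamma>'"
proof -
  have G: "G = ext (the (G 0)) (\<lambda>y. G (Suc y))"
    using assms unfolding down_to_hash_def fun_eq_iff ext_def by (auto split: nat.splits)
  have tail: "down_to_hash \<Gamma> (\<lambda>y. G (Suc y))"
    using assms unfolding down_to_hash_def by (metis ext_Suc)
  have "G 0 = Some p \<or> (p = PDown \<and> G 0 = Some PHash)"
    using assms unfolding down_to_hash_def by (metis ext_0 option.inject)
  then show ?thesis
  proof
    assume "G 0 = Some p"
    with G tail show ?thesis by (intro that(1)) simp_all
  next
    assume "p = PDown \<and> G 0 = Some PHash"
    with G tail show ?thesis by (intro that(2)) simp_all
  qed
qed

lemma down_to_hash_boxi_env: "boxi_env \<Gamma> \<Delta> \<Longrightarrow> down_to_hash \<Delta> \<Delta>' \<Longrightarrow> \<Delta>' = \<Delta>"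
  unfolding down_to_hash_def fun_eq_iff
proof
  fix y assume "boxi_env \<Gamma> \<Delta>" "\<forall>y. \<Delta>' y = \<Delta> y \<or> \<Delta> y = Some PDown \<and> \<Delta>' y = Some PHash"
  then show "\<Delta>' y = \<Delta> y" using boxi_envD[of \<Gamma> \<Delta> y] unfolding boxi_premise_def
    by (cases "\<Gamma> y" rule: pat_option_cases) (auto dest: spec[of _ y])
qed

lemma subject_reduction0: "red0 M P \<Longrightarrow> ty_step ty \<Gamma> M \<Longrightarrow> \<exists>\<Gamma>'. down_to_hash \<Gamma> \<Gamma>' \<and> ty \<Gamma>' P"
proof (induction arbitrary: \<Gamma> rule: step.induct)
  case (root M N)
  then show ?case by (rule subject_reduction_basic_red)
next
  case (appL M M' N)
  from appL(3) obtain \<Gamma>1 \<Gamma>2 where h: "app_split \<Gamma> \<Gamma>1 \<Gamma>2" "ty_step ty \<Gamma>1 M" "ty_step ty \<Gamma>2 N"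
    by (elim ty_step_AppE) blast
  from appL.IH[OF h(2)] obtain \<Gamma>1' where "down_to_hash \<Gamma>1 \<Gamma>1'" "ty \<Gamma>1' M'" by blast
  moreover from h(1) this(1) obtain \<Gamma>' \<Gamma>2'
    where "app_split \<Gamma>' \<Gamma>1' \<Gamma>2'" "weakening \<Gamma>2 \<Gamma>2'" "down_to_hash \<Gamma> \<Gamma>'"
    by (rule down_to_hash_app_split)
  ultimately show ?case using ty_weakening[OF ty.intros[OF h(3)]]
    by (meson ty.intros ty_step.a ty_unfold)
next
  case (appR N N' M)
  from appR(3) obtain \<Gamma>1 \<Gamma>2 where h: "app_split \<Gamma> \<Gamma>2 \<Gamma>1" "ty_step ty \<Gamma>2 M" "ty_step ty \<Gamma>1 N"
    by (elim ty_step_AppE) (blast intro: app_split_sym)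
  from appR.IH[OF h(3)] obtain \<Gamma>1' where "down_to_hash \<Gamma>1 \<Gamma>1'" "ty \<Gamma>1' N'" by blast
  moreover from app_split_sym[OF h(1)] this(1) obtain \<Gamma>' \<Gamma>2'
    where "app_split \<Gamma>' \<Gamma>1' \<Gamma>2'" "weakening \<Gamma>2 \<Gamma>2'" "down_to_hash \<Gamma> \<Gamma>'"
    by (rule down_to_hash_app_split)
  ultimately show ?case using ty_weakening[OF ty.intros[OF h(2)]]
    by (meson app_split_sym ty.intros ty_step.a ty_unfold)
next
  case (lam M M')
  from lam(3) have "ty_step ty (ext PLin \<Gamma>) M" by (elim ty_step_LamE)
  from lam.IH[OF this] obtain G where "down_to_hash (ext PLin \<Gamma>) G" "ty G M'" by blast
  then show ?case by (cases rule: down_to_hash_ext_cases) (auto intro: ty.intros ty_step.ll dest: ty_unfold)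
next
  case (lamI M M')
  from lamI(3) obtain p where "p \<in> {PHash, PDown}" "ty_step ty (ext p \<Gamma>) M"
    by (elim ty_step_LamIE) blast+
  moreover from lamI.IH[OF this(2)] obtain G where "down_to_hash (ext p \<Gamma>) G" "ty G M'" by blast
  ultimately show ?case
    by (elim down_to_hash_ext_cases) (auto intro: ty.intros ty_step.li1 ty_step.li2 dest: ty_unfold)
next
  case (lamC M M')
  from lamC(3) have "ty_step ty (ext PUp \<Gamma>) M" by (elim ty_step_LamCE)
  from lamC.IH[OF this] obtain G where "down_to_hash (ext PUp \<Gamma>) G" "ty G M'" by blast
  then show ?case by (cases rule: down_to_hash_ext_cases) (auto intro: ty.intros ty_step.lc dest: ty_unfold)
next
  case (boxI M M')
  from boxI(3) obtain \<Delta> where h: "boxi_env \<Gamma> \<Delta>" "ty_step ty \<Delta> M" by (elim ty_step_BoxIE)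
  from boxI.IH[OF h(2)] obtain \<Delta>' where "down_to_hash \<Delta> \<Delta>'" "ty \<Delta>' M'" by blast
  with h(1) have "ty_step ty \<Gamma> (BoxI M')" by (metis down_to_hash_boxi_env ty_step.mi ty_unfold)
  then show ?case using down_to_hash_refl ty.intros by blast
qed simp

lemma down_to_hash_env_ok: "down_to_hash \<Gamma> \<Gamma>' \<Longrightarrow> env_ok \<Gamma> \<Longrightarrow> env_ok \<Gamma>'"
proof -
  assume "down_to_hash \<Gamma> \<Gamma>'" "env_ok \<Gamma>"
  then have "{i. \<Gamma>' i \<noteq> None} = {i. \<Gamma> i \<noteq> None}" unfolding down_to_hash_def
    by (metis (mono_tags, lifting) option.distinct(1))
  then show ?thesis using \<open>env_ok \<Gamma>\<close> unfolding env_ok_def by simp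
qed

theorem mainTheorem19:
  assumes "is_term M" and "leads M N" and "red0 N L"
  shows "\<exists>P. is_term P \<and> red0 M P \<and> leads P L"
proof -
  from assms(1) obtain \<Gamma> where \<Gamma>: "env_ok \<Gamma>" "ty \<Gamma> M" unfolding is_term_def by blast
  from leads_red0_commute[OF assms(3,2) ty_unfold[OF \<Gamma>(2)]]
  obtain P where P: "red0 M P" "leads P L" by blast
  from subject_reduction0[OF P(1) ty_unfold[OF \<Gamma>(2)]]
  obtain \<Gamma>' where "down_to_hash \<Gamma> \<Gamma>'" "ty \<Gamma>' P" by blast
  with \<Gamma>(1) have "is_term P" unfolding is_term_def by (blast intro: down_to_hash_env_ok)
  with P show ?thesis by blast
qed

end
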